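(* Assume $f\in W^{1,\infty}(\mathbb{R})$ and that hypothesis (H) holds for Banach spaces $X,Z$. Then a pair $(u,m)\in C^{2,\alpha}(\mathbb{T}^d)\times C^{2,\alpha}(\mathbb{T}^d)$ solves the MFG system if and only if $F(u,m):=(u,m)+T(G(u,m))=0$.
   Context: $\mathbb{T}^d$ is the flat torus, $\lambda>0$, $\alpha\in(0,1)$, $m_0\in C^{0,\alpha}(\mathbb{T}^d)$ a probability density. The MFG system is $-\Delta u + \tfrac12|Du|^2 + \lambda u = f(m)$, $-\Delta m - \operatorname{div}(m Du) + \lambda m = \lambda m_0$ in $\mathbb{T}^d$. Hypothesis (H): $X$ and $Z$ are Banach spaces with continuous embeddings $C^{2,\alpha}(\mathbb{T}^d)\times C^{2,\alpha}(\mathbb{T}^d)\subset X\subset H^1(\mathbb{T}^d)\times L^2(\mathbb{T}^d)$ and $Z\subset L^1(\mathbb{T}^d)\times (W^{1,\infty}(\mathbb{T}^d))'$; for every $(v,\rho)\in X$, $G(v,\rho):=\big(\tfrac12|Dv|^2 - f(\rho),\, -\operatorname{div}(\rho Dv) - \lambda m_0\big)$ belongs to $Z$; and for every $(\xi,\zeta)\in Z$ the system $-\Delta v+\lambda v=\xi$, $-\Delta\rho+\lambda\rho=\zeta$ in $\mathbb{T}^d$ has a unique distributional solution $T(\xi,\zeta)$, which belongs to $X$. *)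

theory Defs
  imports "HOL-Analysis.Analysis"
begin

text \<open>The flat torus T^d is modelled by functions on real^'n (d = CARD('n))
  that are 1-periodic in every coordinate; integrals over T^d are integrals
  over the unit cube.  Distributions on T^d are real functionals on functions,
  normalised to vanish outside the smooth periodic test functions.\<close>

type_synonym ('n) tfun = "real^('n::finite) \<Rightarrow> real"
type_synonym 'n distr = "'n tfun \<Rightarrow> real"
type_synonym 'n dpair = "'n distr \<times> 'n distr"

definition cube :: "(real^('n::finite)) set" where
  "cube = cbox 0 1"

definition periodic :: "(real^('n::finite) \<Rightarrow> 'a) \<Rightarrow> bool" where
  "periodic u \<longleftrightarrow> (\<forall>x i. u (x + axis i 1) = u x)"

definition pd :: "('n::finite) \<Rightarrow> 'n tfun \<Rightarrow> real^'n \<Rightarrow> real" where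
  "pd i u x = deriv (\<lambda>t. u (x + t *\<^sub>R axis i 1)) 0"

fun pds :: "('n::finite) list \<Rightarrow> 'n tfun \<Rightarrow> 'n tfun" where
  "pds [] u = u"
| "pds (i # is) u = pd i (pds is u)"

definition grad :: "('n::finite) tfun \<Rightarrow> real^'n \<Rightarrow> real^'n" where
  "grad u x = (\<chi> i. pd i u x)"

definition hess :: "('n::finite) tfun \<Rightarrow> real^'n \<Rightarrow> real^'n^'n" where
  "hess u x = (\<chi> i j. pd j (pd i u) x)"

definition lap :: "('n::finite) tfun \<Rightarrow> real^'n \<Rightarrow> real" where
  "lap u x = (\<Sum>i\<in>UNIV. pd i (pd i u) x)"

definition diverg :: "(real^('n::finite) \<Rightarrow> real^'n) \<Rightarrow> real^'n \<Rightarrow> real" where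
  "diverg V x = (\<Sum>i\<in>UNIV. pd i (\<lambda>y. V y $ i) x)"

definition holder :: "real \<Rightarrow> (real^('n::finite) \<Rightarrow> 'b::real_normed_vector) \<Rightarrow> bool" where
  "holder \<alpha> g \<longleftrightarrow> (\<exists>C. \<forall>x y. norm (g x - g y) \<le> C * dist x y powr \<alpha>)"

definition C0a :: "real \<Rightarrow> ('n::finite) tfun \<Rightarrow> bool" where
  "C0a \<alpha> u \<longleftrightarrow> periodic u \<and> holder \<alpha> u"

definition C2a :: "real \<Rightarrow> ('n::finite) tfun \<Rightarrow> bool" where
  "C2a \<alpha> u \<longleftrightarrow> periodic u \<and>
     (\<exists>Du D2u. (\<forall>x. (u has_derivative (\<lambda>h. Du x \<bullet> h)) (at x)) \<and>
               (\<forall>x. (Du has_derivative (\<lambda>h. D2u x *v h)) (at x)) \<and>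
               holder \<alpha> (D2u :: real^'n \<Rightarrow> real^'n^'n))"

definition C2a_norm :: "real \<Rightarrow> ('n::finite) tfun \<Rightarrow> real" where
  "C2a_norm \<alpha> u = (SUP x. \<bar>u x\<bar>) + (SUP x. norm (grad u x)) + (SUP x. norm (hess u x))
     + (SUP p\<in>{p. fst p \<noteq> snd p}. norm (hess u (fst p) - hess u (snd p)) / dist (fst p) (snd p) powr \<alpha>)"

definition test_fun :: "('n::finite) tfun \<Rightarrow> bool" where
  "test_fun \<phi> \<longleftrightarrow> periodic \<phi> \<and>
     (\<forall>is i x. (\<lambda>t. pds is \<phi> (x + t *\<^sub>R axis i 1)) differentiable (at 0)) \<and>
     (\<forall>is. continuous_on UNIV (pds is \<phi>))"

definition W1inf_norm :: "('n::finite) tfun \<Rightarrow> real" where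
  "W1inf_norm \<phi> = (SUP x. \<bar>\<phi> x\<bar>) + (SUP x. norm (grad \<phi> x))"

definition L1_fun :: "('n::finite) tfun \<Rightarrow> bool" where
  "L1_fun v \<longleftrightarrow> periodic v \<and> v \<in> borel_measurable lborel \<and> set_integrable lborel cube v"

definition L2_fun :: "('n::finite) tfun \<Rightarrow> bool" where
  "L2_fun v \<longleftrightarrow> periodic v \<and> v \<in> borel_measurable lborel \<and>
     set_integrable lborel cube (\<lambda>x. (v x)\<^sup>2)"

definition L1_norm :: "('n::finite) tfun \<Rightarrow> real" where
  "L1_norm v = (LINT x:cube|lborel. \<bar>v x\<bar>)"

definition L2_norm :: "('n::finite) tfun \<Rightarrow> real" where
  "L2_norm v = sqrt (LINT x:cube|lborel. (v x)\<^sup>2)"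

definition distr :: "('n::finite) distr \<Rightarrow> bool" where
  "distr w \<longleftrightarrow> (\<forall>\<phi>. \<not> test_fun \<phi> \<longrightarrow> w \<phi> = 0) \<and>
     (\<forall>\<phi> \<psi> a b. test_fun \<phi> \<and> test_fun \<psi> \<longrightarrow>
        w (\<lambda>x. a * \<phi> x + b * \<psi> x) = a * w \<phi> + b * w \<psi>)"

definition distr_of :: "('n::finite) tfun \<Rightarrow> 'n distr" where
  "distr_of v = (\<lambda>\<phi>. if test_fun \<phi> then (LINT x:cube|lborel. v x * \<phi> x) else 0)"

definition dzero :: "('n::finite) distr" where "dzero = (\<lambda>\<phi>. 0)"
definition dadd :: "('n::finite) distr \<Rightarrow> 'n distr \<Rightarrow> 'n distr" where
  "dadd w1 w2 = (\<lambda>\<phi>. w1 \<phi> + w2 \<phi>)"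
definition dscale :: "real \<Rightarrow> ('n::finite) distr \<Rightarrow> 'n distr" where
  "dscale c w = (\<lambda>\<phi>. c * w \<phi>)"

definition pzero :: "('n::finite) dpair" where "pzero = (dzero, dzero)"
definition padd :: "('n::finite) dpair \<Rightarrow> 'n dpair \<Rightarrow> 'n dpair" where
  "padd w1 w2 = (dadd (fst w1) (fst w2), dadd (snd w1) (snd w2))"
definition pscale :: "real \<Rightarrow> ('n::finite) dpair \<Rightarrow> 'n dpair" where
  "pscale c w = (dscale c (fst w), dscale c (snd w))"
definition pdiff :: "('n::finite) dpair \<Rightarrow> 'n dpair \<Rightarrow> 'n dpair" where
  "pdiff w1 w2 = padd w1 (pscale (-1) w2)"

definition L1d :: "('n::finite) distr \<Rightarrow> bool" where
  "L1d w \<longleftrightarrow> (\<exists>v. L1_fun v \<and> w = distr_of v)"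
definition l1_val :: "('n::finite) distr \<Rightarrow> 'n tfun" where
  "l1_val w = (SOME v. L1_fun v \<and> w = distr_of v)"
definition L1d_norm :: "('n::finite) distr \<Rightarrow> real" where
  "L1d_norm w = L1_norm (l1_val w)"

definition L2d :: "('n::finite) distr \<Rightarrow> bool" where
  "L2d w \<longleftrightarrow> (\<exists>v. L2_fun v \<and> w = distr_of v)"
definition l2_val :: "('n::finite) distr \<Rightarrow> 'n tfun" where
  "l2_val w = (SOME v. L2_fun v \<and> w = distr_of v)"
definition L2d_norm :: "('n::finite) distr \<Rightarrow> real" where
  "L2d_norm w = L2_norm (l2_val w)"

definition h1_rep :: "('n::finite) distr \<Rightarrow> 'n tfun \<Rightarrow> (real^'n \<Rightarrow> real^'n) \<Rightarrow> bool" where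
  "h1_rep w v g \<longleftrightarrow> L2_fun v \<and> (\<forall>i. L2_fun (\<lambda>x. g x $ i)) \<and> w = distr_of v \<and>
     (\<forall>i \<phi>. test_fun \<phi> \<longrightarrow>
        (LINT x:cube|lborel. v x * pd i \<phi> x) = - (LINT x:cube|lborel. g x $ i * \<phi> x))"
definition H1d :: "('n::finite) distr \<Rightarrow> bool" where
  "H1d w \<longleftrightarrow> (\<exists>v g. h1_rep w v g)"
definition h1_val :: "('n::finite) distr \<Rightarrow> 'n tfun" where
  "h1_val w = fst (SOME p. h1_rep w (fst p) (snd p))"
definition h1_grad :: "('n::finite) distr \<Rightarrow> real^'n \<Rightarrow> real^'n" where
  "h1_grad w = snd (SOME p. h1_rep w (fst p) (snd p))"
definition H1d_norm :: "('n::finite) distr \<Rightarrow> real" where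
  "H1d_norm w = sqrt ((L2_norm (h1_val w))\<^sup>2 + (\<Sum>i\<in>UNIV. (L2_norm (\<lambda>x. h1_grad w x $ i))\<^sup>2))"

definition W1d :: "('n::finite) distr \<Rightarrow> bool" where
  "W1d w \<longleftrightarrow> distr w \<and> (\<exists>C. \<forall>\<phi>. test_fun \<phi> \<longrightarrow> \<bar>w \<phi>\<bar> \<le> C * W1inf_norm \<phi>)"
definition W1d_norm :: "('n::finite) distr \<Rightarrow> real" where
  "W1d_norm w = (SUP \<phi>\<in>{\<phi>. test_fun \<phi> \<and> W1inf_norm \<phi> \<le> 1}. \<bar>w \<phi>\<bar>)"

definition banach_on :: "('n::finite) dpair set \<Rightarrow> ('n dpair \<Rightarrow> real) \<Rightarrow> bool" where
  "banach_on X N \<longleftrightarrow>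
     pzero \<in> X \<and> (\<forall>w1\<in>X. \<forall>w2\<in>X. padd w1 w2 \<in> X) \<and> (\<forall>c. \<forall>w\<in>X. pscale c w \<in> X) \<and>
     (\<forall>w\<in>X. 0 \<le> N w \<and> (N w = 0 \<longleftrightarrow> w = pzero)) \<and>
     (\<forall>c. \<forall>w\<in>X. N (pscale c w) = \<bar>c\<bar> * N w) \<and>
     (\<forall>w1\<in>X. \<forall>w2\<in>X. N (padd w1 w2) \<le> N w1 + N w2) \<and>
     (\<forall>s. (\<forall>n. s n \<in> X) \<and> (\<forall>e>0. \<exists>K. \<forall>p\<ge>K. \<forall>q\<ge>K. N (pdiff (s p) (s q)) < e)
          \<longrightarrow> (\<exists>w\<in>X. (\<lambda>n. N (pdiff (s n) w)) \<longlonglongrightarrow> 0))"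

definition W1inf_R :: "(real \<Rightarrow> real) \<Rightarrow> bool" where
  "W1inf_R f \<longleftrightarrow> bounded (range f) \<and> (\<exists>L. L-lipschitz_on UNIV f)"

definition prob_density_C0a :: "real \<Rightarrow> ('n::finite) tfun \<Rightarrow> bool" where
  "prob_density_C0a \<alpha> m0 \<longleftrightarrow> C0a \<alpha> m0 \<and> (\<forall>x. 0 \<le> m0 x) \<and> (LINT x:cube|lborel. m0 x) = 1"

text \<open>The map G(v,rho) = (|Dv|^2/2 - f(rho), -div(rho Dv) - lambda m0), as distributions.\<close>
definition Gmap :: "(real \<Rightarrow> real) \<Rightarrow> real \<Rightarrow> ('n::finite) tfun \<Rightarrow> 'n dpair \<Rightarrow> 'n dpair" where
  "Gmap f lam m0 w =
     (let g = h1_grad (fst w); r = l2_val (snd w) in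
      (distr_of (\<lambda>x. (norm (g x))\<^sup>2 / 2 - f (r x)),
       (\<lambda>\<phi>. if test_fun \<phi> then (LINT x:cube|lborel. r x * (g x \<bullet> grad \<phi> x))
                               - lam * (LINT x:cube|lborel. m0 x * \<phi> x) else 0)))"

definition dist_sol :: "real \<Rightarrow> ('n::finite) distr \<Rightarrow> 'n distr \<Rightarrow> bool" where
  "dist_sol lam \<xi> v \<longleftrightarrow> distr v \<and>
     (\<forall>\<phi>. test_fun \<phi> \<longrightarrow> v (\<lambda>x. - lap \<phi> x + lam * \<phi> x) = \<xi> \<phi>)"

definition dist_sol_pair :: "real \<Rightarrow> ('n::finite) dpair \<Rightarrow> 'n dpair \<Rightarrow> bool" where
  "dist_sol_pair lam z w \<longleftrightarrow> dist_sol lam (fst z) (fst w) \<and> dist_sol lam (snd z) (snd w)"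

definition hypH :: "real \<Rightarrow> real \<Rightarrow> (real \<Rightarrow> real) \<Rightarrow> ('n::finite) tfun \<Rightarrow>
    'n dpair set \<Rightarrow> ('n dpair \<Rightarrow> real) \<Rightarrow> 'n dpair set \<Rightarrow> ('n dpair \<Rightarrow> real) \<Rightarrow>
    ('n dpair \<Rightarrow> 'n dpair) \<Rightarrow> bool" where
  "hypH \<alpha> lam f m0 X NX Z NZ T \<longleftrightarrow>
     banach_on X NX \<and> banach_on Z NZ \<and>
     (\<forall>u m. C2a \<alpha> u \<and> C2a \<alpha> m \<longrightarrow> (distr_of u, distr_of m) \<in> X) \<and>
     (\<exists>C. \<forall>u m. C2a \<alpha> u \<and> C2a \<alpha> m \<longrightarrow>
          NX (distr_of u, distr_of m) \<le> C * (C2a_norm \<alpha> u + C2a_norm \<alpha> m)) \<and>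
     (\<forall>w\<in>X. H1d (fst w) \<and> L2d (snd w)) \<and>
     (\<exists>C. \<forall>w\<in>X. H1d_norm (fst w) + L2d_norm (snd w) \<le> C * NX w) \<and>
     (\<forall>z\<in>Z. L1d (fst z) \<and> W1d (snd z)) \<and>
     (\<exists>C. \<forall>z\<in>Z. L1d_norm (fst z) + W1d_norm (snd z) \<le> C * NZ z) \<and>
     (\<forall>w\<in>X. Gmap f lam m0 w \<in> Z) \<and>
     (\<forall>z\<in>Z. T z \<in> X \<and> dist_sol_pair lam z (T z) \<and>
        (\<forall>w. dist_sol_pair lam z w \<longrightarrow> w = T z))"

definition MFG_solution :: "real \<Rightarrow> (real \<Rightarrow> real) \<Rightarrow> ('n::finite) tfun \<Rightarrow> 'n tfun \<Rightarrow> 'n tfun \<Rightarrow> bool" where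
  "MFG_solution lam f m0 u m \<longleftrightarrow>
     (\<forall>x. - lap u x + (norm (grad u x))\<^sup>2 / 2 + lam * u x = f (m x)) \<and>
     (\<forall>x. - lap m x - diverg (\<lambda>y. m y *\<^sub>R grad u y) x + lam * m x = lam * m0 x)"

end

theory Submission
  imports Defs
begin

text \<open>Since \<open>T\<close> inverts \<open>-\<Delta> + \<lambda>\<close> uniquely on \<open>Z\<close>, the equation \<open>(u, m) + T (G (u, m)) = 0\<close>
  says exactly that \<open>-(u, m)\<close> is a distributional solution of the two linear equations with
  right-hand side \<open>G (u, m)\<close>. For \<open>C^(2,\<alpha>)\<close> data the \<open>H\<^sup>1\<close> gradient and the \<open>L\<^sup>2\<close> representative occurring in
  \<open>G\<close> agree a.e. with the classical \<open>Du\<close> and \<open>m\<close>, and integration by parts on the torus, where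
  periodicity kills the boundary terms, turns the weak equations into \<open>\<integral> R \<phi> = 0\<close> for all test
  functions \<open>\<phi>\<close>, \<open>R\<close> being the continuous periodic residual of either MFG equation. The fundamental
  lemma of the calculus of variations then forces \<open>R = 0\<close>. It is proved with trigonometric
  polynomials: products of polynomials in single cosines approximate the indicator of every box
  boundedly and pointwise on the open unit cube, so an integrable function orthogonal to them
  integrates to zero over every box and therefore vanishes a.e.\<close>

lemma pd_eqI:
  assumes "\<And>x. ((\<lambda>t. \<phi> (x + t *\<^sub>R axis i 1)) has_real_derivative \<psi> x) (at 0)"
  shows "pd i \<phi> = \<psi>"
  using assms by (auto simp: pd_def intro!: ext DERIV_imp_deriv)

section \<open>Trigonometric polynomials\<close>

inductive trig_poly :: "(real^'n::finite \<Rightarrow> real) \<Rightarrow> bool" where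
  trig_poly_const: "trig_poly (\<lambda>x. c)"
| trig_poly_cos: "trig_poly (\<lambda>x. cos (2*pi * x$j + a))"
| trig_poly_add: "trig_poly f \<Longrightarrow> trig_poly g \<Longrightarrow> trig_poly (\<lambda>x. f x + g x)"
| trig_poly_mult: "trig_poly f \<Longrightarrow> trig_poly g \<Longrightarrow> trig_poly (\<lambda>x. f x * g x)"

lemma trig_poly_periodic: "trig_poly \<phi> \<Longrightarrow> periodic \<phi>"
proof (induction rule: trig_poly.induct)
  case (trig_poly_cos j a)
  have "cos (2*pi * (x + axis i 1)$j + a) = cos (2*pi * x$j + a)" for x :: "real^'a" and i
  proof -
    have "cos (2*pi * (x + axis i 1)$j + a) = cos (2*pi * x$j + a + (if j = i then 2*pi else 0))"
      by (simp add: axis_def algebra_simps)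
    then show ?thesis by (simp add: cos_add)
  qed
  then show ?case by (simp add: periodic_def)
qed (simp_all add: periodic_def)

lemma trig_poly_continuous: "trig_poly \<phi> \<Longrightarrow> continuous_on UNIV \<phi>"
  by (induction rule: trig_poly.induct) (auto intro!: continuous_intros)

lemma trig_poly_has_derivative_along_axis:
  assumes "trig_poly \<phi>"
  shows "\<exists>\<psi>. trig_poly \<psi> \<and> (\<forall>x. ((\<lambda>t. \<phi> (x + t *\<^sub>R axis i 1)) has_real_derivative \<psi> x) (at 0))"
  using assms
proof (induction rule: trig_poly.induct)
  case (trig_poly_const c)
  show ?case by (auto intro!: exI[of _ "\<lambda>x. 0"] trig_poly.trig_poly_const)
next
  case (trig_poly_cos j a)
  define c where "c = (if j = i then 2*pi else 0)"
  have "((\<lambda>t. cos (2*pi * (x + t *\<^sub>R axis i 1)$j + a)) has_real_derivative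
          c * cos (2*pi * x$j + (a + pi/2))) (at 0)" for x :: "real^'a"
  proof -
    have "(\<lambda>t. cos (2*pi * (x + t *\<^sub>R axis i 1)$j + a)) = (\<lambda>t. cos (2*pi * x$j + a + c * t))"
      by (auto simp: c_def axis_def algebra_simps)
    moreover have "((\<lambda>t. cos (2*pi * x$j + a + c * t)) has_real_derivative
        - sin (2*pi * x$j + a) * c) (at 0)"
      by (auto intro!: derivative_eq_intros)
    moreover have "cos ((2*pi * x$j + a) + pi/2) = - sin (2*pi * x$j + a)"
      by (simp only: cos_add cos_pi_half sin_pi_half)
    ultimately show ?thesis by (simp add: add.assoc mult.commute)
  qed
  moreover have "trig_poly (\<lambda>x::real^'a. c * cos (2*pi * x$j + (a + pi/2)))"
    by (intro trig_poly.trig_poly_mult trig_poly.trig_poly_const trig_poly.trig_poly_cos)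
  ultimately show ?case by blast
next
  case (trig_poly_add f g)
  then obtain \<psi>1 \<psi>2 where "trig_poly \<psi>1" "trig_poly \<psi>2"
    and "\<And>x. ((\<lambda>t. f (x + t *\<^sub>R axis i 1)) has_real_derivative \<psi>1 x) (at 0)"
    and "\<And>x. ((\<lambda>t. g (x + t *\<^sub>R axis i 1)) has_real_derivative \<psi>2 x) (at 0)"
    by blast
  then show ?case
    by (intro exI[of _ "\<lambda>x. \<psi>1 x + \<psi>2 x"]) (auto intro!: trig_poly.trig_poly_add DERIV_add)
next
  case (trig_poly_mult f g)
  then obtain \<psi>1 \<psi>2 where "trig_poly \<psi>1" "trig_poly \<psi>2"
    and d1: "\<And>x. ((\<lambda>t. f (x + t *\<^sub>R axis i 1)) has_real_derivative \<psi>1 x) (at 0)"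
    and d2: "\<And>x. ((\<lambda>t. g (x + t *\<^sub>R axis i 1)) has_real_derivative \<psi>2 x) (at 0)"
    by blast
  have "((\<lambda>t. f (x + t *\<^sub>R axis i 1) * g (x + t *\<^sub>R axis i 1)) has_real_derivative
      \<psi>1 x * g x + f x * \<psi>2 x) (at 0)" for x
    using DERIV_mult[OF d1[of x] d2[of x]] by (simp add: mult.commute)
  then show ?case
    by (intro exI[of _ "\<lambda>x. \<psi>1 x * g x + f x * \<psi>2 x"])
      (auto intro!: trig_poly.trig_poly_add trig_poly.trig_poly_mult \<open>trig_poly \<psi>1\<close> \<open>trig_poly \<psi>2\<close> trig_poly_mult.hyps)
qed

lemma trig_poly_pd: "trig_poly \<phi> \<Longrightarrow> trig_poly (pd i \<phi>)"
  using trig_poly_has_derivative_along_axis pd_eqI by metis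

lemma trig_poly_pds: "trig_poly \<phi> \<Longrightarrow> trig_poly (pds is \<phi>)"
  by (induction "is") (auto intro: trig_poly_pd)

lemma trig_poly_test_fun:
  assumes "trig_poly \<phi>"
  shows "test_fun \<phi>"
  unfolding test_fun_def
proof (intro conjI allI)
  show "periodic \<phi>" using trig_poly_periodic[OF assms] .
  fix "is" i x
  have "trig_poly (pds is \<phi>)" using trig_poly_pds[OF assms] .
  then show "continuous_on UNIV (pds is \<phi>)"
    and "(\<lambda>t. pds is \<phi> (x + t *\<^sub>R axis i 1)) differentiable at 0"
    using trig_poly_continuous trig_poly_has_derivative_along_axis real_differentiable_def by blast+
qed

lemma trig_poly_polynomial_comp:
  assumes "real_polynomial_function P" "trig_poly h"
  shows "trig_poly (\<lambda>x. P (h x))"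
  using assms(1)
proof (induction rule: real_polynomial_function.induct)
  case (linear f)
  have "f y = y * f 1" for y
  proof -
    have "f y = f (y *\<^sub>R 1)" by simp
    also have "\<dots> = y *\<^sub>R f 1" by (rule linear_scale[OF bounded_linear.linear[OF linear]])
    finally show ?thesis by simp
  qed
  then have "(\<lambda>x. f (h x)) = (\<lambda>x. h x * f 1)" by (intro ext)
  then show ?case by (simp add: trig_poly_mult[OF assms(2) trig_poly_const])
next
  case (const c) then show ?case by (rule trig_poly_const)
next
  case (add f g) then show ?case by (intro trig_poly_add)
next
  case (mult f g) then show ?case by (intro trig_poly_mult)
qed

lemma trig_poly_prod:
  "finite S \<Longrightarrow> (\<And>i. i \<in> S \<Longrightarrow> trig_poly (f i)) \<Longrightarrow> trig_poly (\<lambda>x. \<Prod>i\<in>S. f i x)"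
proof (induction S rule: finite_induct)
  case empty
  show ?case using trig_poly_const[of 1] by simp
next
  case (insert a F)
  then have "trig_poly (\<lambda>x. f a x * (\<Prod>i\<in>F. f i x))" by (intro trig_poly_mult) auto
  then show ?case using insert.hyps by simp
qed

lemma cos_2pi_gt_cos_iff:
  fixes \<delta> y :: real
  assumes "0 < \<delta>" "\<delta> < 1/2" "\<bar>y\<bar> \<le> 1 - \<delta>"
  shows "cos (2*pi*y) > cos (2*pi*\<delta>) \<longleftrightarrow> \<bar>y\<bar> < \<delta>"
proof -
  define r where "r = \<bar>y\<bar>"
  have r: "0 \<le> r" "r \<le> 1 - \<delta>" using assms by (auto simp: r_def)
  have "cos (2*pi*y) = cos (2*pi*r)" by (simp add: r_def abs_if)
  moreover have "cos (2*pi*r) > cos (2*pi*\<delta>) \<longleftrightarrow> r < \<delta>"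
  proof
    assume "r < \<delta>"
    then show "cos (2*pi*r) > cos (2*pi*\<delta>)"
      using r assms by (intro cos_monotone_0_pi) auto
  next
    assume gt: "cos (2*pi*r) > cos (2*pi*\<delta>)"
    show "r < \<delta>"
    proof (rule ccontr)
      assume "\<not> r < \<delta>"
      have "cos (2*pi*r) \<le> cos (2*pi*\<delta>)"
      proof (cases "r \<le> 1/2")
        case True
        then show ?thesis using \<open>\<not> r < \<delta>\<close> assms by (intro cos_monotone_0_pi_le) auto
      next
        case False
        have "cos (2*pi*(1 - r)) \<le> cos (2*pi*\<delta>)"
          using False r assms by (intro cos_monotone_0_pi_le) auto
        moreover have "cos (2*pi*(1 - r)) = cos (2*pi*r)"
          by (simp add: right_diff_distrib cos_diff)
        ultimately show ?thesis by simp
      qed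
      then show False using gt by simp
    qed
  qed
  ultimately show ?thesis by (simp add: r_def)
qed

text \<open>Ramps of growing slope, uniformly approximated by polynomials to within their
  slope's inverse, converge pointwise to the indicator of the half-line above the threshold.\<close>
lemma polynomial_approx_threshold_indicator:
  fixes \<theta> :: real
  obtains P :: "nat \<Rightarrow> real \<Rightarrow> real"
  where "\<And>k. real_polynomial_function (P k)"
    and "\<And>k y. y \<in> {-1..1} \<Longrightarrow> \<bar>P k y\<bar> \<le> 2"
    and "\<And>y. y \<in> {-1..1} \<Longrightarrow> (\<lambda>k. P k y) \<longlonglongrightarrow> (if y > \<theta> then 1 else 0)"
proof -
  define F where "F k y = min 1 (max 0 ((real k + 1) * (y - \<theta>)))" for k y
  have "\<exists>P. real_polynomial_function P \<and> (\<forall>y\<in>{-1..1}. \<bar>F k y - P y\<bar> < 1 / (real k + 1))" for k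
  proof -
    have "continuous_on {-1..1::real} (F k)" unfolding F_def by (intro continuous_intros)
    then obtain P where "real_polynomial_function P" "\<And>y. y \<in> {-1..1::real} \<Longrightarrow> \<bar>F k y - P y\<bar> < 1 / (real k + 1)"
      using Stone_Weierstrass_real_polynomial_function[of "{-1..1::real}" "F k" "1 / (real k + 1)"] by auto
    then show ?thesis by blast
  qed
  then obtain P where P: "\<And>k. real_polynomial_function (P k)"
    and approx: "\<And>k y. y \<in> {-1..1} \<Longrightarrow> \<bar>F k y - P k y\<bar> < 1 / (real k + 1)"
    by metis
  show thesis
  proof (rule that[OF P])
    fix k and y :: real assume y: "y \<in> {-1..1}"
    have "\<bar>F k y\<bar> \<le> 1" by (auto simp: F_def)
    moreover have "1 / (real k + 1) \<le> 1" by (simp add: field_simps)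
    ultimately show "\<bar>P k y\<bar> \<le> 2" using approx[OF y, of k] by linarith
  next
    fix y :: real assume y: "y \<in> {-1..1}"
    have "(\<lambda>k. P k y - F k y) \<longlonglongrightarrow> 0"
    proof (rule Lim_null_comparison)
      show "\<forall>\<^sub>F k in sequentially. norm (P k y - F k y) \<le> 1 / (real k + 1)"
        using approx[OF y] by (auto intro!: always_eventually less_imp_le simp: abs_minus_commute)
      show "(\<lambda>k. 1 / (real k + 1)) \<longlonglongrightarrow> 0"
        using LIMSEQ_inverse_real_of_nat by (simp add: inverse_eq_divide add.commute)
    qed
    moreover have "(\<lambda>k. F k y) \<longlonglongrightarrow> (if y > \<theta> then 1 else 0)"
    proof (cases "y > \<theta>")
      case True
      obtain N :: nat where N: "1 / (y - \<theta>) < real N" using reals_Archimedean2 by blast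
      have "F k y = 1" if "k \<ge> N" for k
      proof -
        have "1 / (y - \<theta>) < real k + 1" using N that by linarith
        then have "1 < (real k + 1) * (y - \<theta>)" using True by (simp add: field_simps)
        then show ?thesis by (simp add: F_def)
      qed
      then have "eventually (\<lambda>k. F k y = 1) sequentially" by (auto simp: eventually_sequentially)
      then show ?thesis using True by (simp add: tendsto_eventually)
    next
      case False
      then have "(real k + 1) * (y - \<theta>) \<le> 0" for k by (intro mult_nonneg_nonpos) auto
      then show ?thesis using False by (simp add: F_def)
    qed
    ultimately have "(\<lambda>k. (P k y - F k y) + F k y) \<longlonglongrightarrow> 0 + (if y > \<theta> then 1 else 0)"
      by (intro tendsto_add)
    then show "(\<lambda>k. P k y) \<longlonglongrightarrow> (if y > \<theta> then 1 else 0)" by simp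
  qed
qed

text \<open>On \<open>(0, 1)\<close> the interval \<open>(c, d)\<close> is a superlevel set of a single cosine;
  composing it with the polynomials above gives the approximating trigonometric polynomials.\<close>
lemma trig_poly_approx_indicator_interval:
  fixes a b :: real and i :: "'n::finite"
  obtains \<psi> :: "nat \<Rightarrow> real \<Rightarrow> real"
  where "\<And>k. trig_poly (\<lambda>x::real^'n. \<psi> k (x$i))" and "\<And>k t. \<bar>\<psi> k t\<bar> \<le> 2"
    and "\<And>t. 0 < t \<Longrightarrow> t < 1 \<Longrightarrow> (\<lambda>k. \<psi> k t) \<longlonglongrightarrow> indicator {a<..<b} t"
proof -
  define c where "c = max a 0"
  define d where "d = min b 1"
  have ind: "indicator {a<..<b} t = (if c < t \<and> t < d then 1 else (0::real))" if "0 < t" "t < 1" for t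
    using that by (auto simp: c_def d_def indicator_def)
  consider "d \<le> c" | "c = 0 \<and> d = 1" | "c < d" "\<not> (c = 0 \<and> d = 1)" by linarith
  then show thesis
  proof cases
    case 1
    show thesis by (rule that[of "\<lambda>k t. 0"]) (use 1 ind in \<open>auto intro: trig_poly_const\<close>)
  next
    case 2
    show thesis by (rule that[of "\<lambda>k t. 1"]) (use 2 ind in \<open>auto intro: trig_poly_const\<close>)
  next
    case 3
    have cd: "0 \<le> c" "d \<le> 1" by (auto simp: c_def d_def)
    define \<delta> where "\<delta> = (d - c) / 2"
    define m where "m = (c + d) / 2"
    define q where "q t = cos (2*pi*t + (- 2*pi*m))" for t
    have \<delta>: "0 < \<delta>" "\<delta> < 1/2" using 3 cd by (auto simp: \<delta>_def)
    have q_gt_iff: "q t > cos (2*pi*\<delta>) \<longleftrightarrow> c < t \<and> t < d" if "0 < t" "t < 1" for t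
    proof -
      have "q t = cos (2*pi*(t - m))" by (simp add: q_def algebra_simps)
      moreover have "\<bar>t - m\<bar> \<le> 1 - \<delta>"
        using that cd unfolding abs_le_iff m_def \<delta>_def by (simp add: field_simps)
      ultimately have "q t > cos (2*pi*\<delta>) \<longleftrightarrow> \<bar>t - m\<bar> < \<delta>"
        using cos_2pi_gt_cos_iff[OF \<delta>] by simp
      also have "\<dots> \<longleftrightarrow> c < t \<and> t < d"
        unfolding abs_less_iff m_def \<delta>_def by (auto simp: field_simps)
      finally show ?thesis .
    qed
    obtain P where P: "\<And>k. real_polynomial_function (P k)"
      and P_bound: "\<And>k y. y \<in> {-1..1} \<Longrightarrow> \<bar>P k y\<bar> \<le> 2"
      and P_lim: "\<And>y. y \<in> {-1..1} \<Longrightarrow> (\<lambda>k. P k y) \<longlonglongrightarrow> (if y > cos (2*pi*\<delta>) then 1 else 0)"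
      using polynomial_approx_threshold_indicator by metis
    have q_range: "q t \<in> {-1..1}" for t by (auto simp: q_def)
    show thesis
    proof (rule that[of "\<lambda>k t. P k (q t)"])
      show "trig_poly (\<lambda>x::real^'n. P k (q (x$i)))" for k
        unfolding q_def by (rule trig_poly_polynomial_comp[OF P trig_poly_cos])
      show "\<bar>P k (q t)\<bar> \<le> 2" for k t using P_bound[OF q_range] .
      show "(\<lambda>k. P k (q t)) \<longlonglongrightarrow> indicator {a<..<b} t" if "0 < t" "t < 1" for t
        using P_lim[OF q_range, of t] ind[OF that] q_gt_iff[OF that] by simp
    qed
  qed
qed

lemma prod_indicator_eq_indicator_box:
  fixes a b x :: "real^'n::finite"
  shows "(\<Prod>i\<in>UNIV. indicator {a$i<..<b$i} (x$i)) = (indicator (box a b) x :: real)"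
proof (cases "x \<in> box a b")
  case True
  then show ?thesis by (simp add: mem_box_cart indicator_def)
next
  case False
  then obtain i where "\<not> (a$i < x$i \<and> x$i < b$i)" by (auto simp: mem_box_cart)
  then have "indicator {a$i<..<b$i} (x$i) = (0::real)" by (simp add: indicator_def)
  then have "(\<Prod>i\<in>UNIV. indicator {a$i<..<b$i} (x$i)) = (0::real)"
    by (intro prod_zero) auto
  then show ?thesis using False by simp
qed

lemma trig_poly_approx_indicator_box:
  fixes a b :: "real^'n::finite"
  obtains \<Phi> :: "nat \<Rightarrow> real^'n \<Rightarrow> real"
  where "\<And>k. trig_poly (\<Phi> k)" and "\<And>k x. \<bar>\<Phi> k x\<bar> \<le> 2 ^ CARD('n)"
    and "\<And>x. x \<in> box 0 1 \<Longrightarrow> (\<lambda>k. \<Phi> k x) \<longlonglongrightarrow> indicator (box a b) x"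
proof -
  have "\<exists>\<psi>::nat \<Rightarrow> real \<Rightarrow> real. (\<forall>k. trig_poly (\<lambda>x::real^'n. \<psi> k (x$i))) \<and> (\<forall>k t. \<bar>\<psi> k t\<bar> \<le> 2) \<and>
     (\<forall>t. 0 < t \<and> t < 1 \<longrightarrow> (\<lambda>k. \<psi> k t) \<longlonglongrightarrow> indicator {a$i<..<b$i} t)" for i
    by (rule trig_poly_approx_indicator_interval[where a="a$i" and b="b$i" and i=i]) blast
  then obtain \<Psi> where \<Psi>_trig_poly: "\<And>i k. trig_poly (\<lambda>x::real^'n. \<Psi> i k (x$i))"
    and \<Psi>_bound: "\<And>i k t. \<bar>\<Psi> i k t\<bar> \<le> 2"
    and \<Psi>_lim: "\<And>i t. 0 < t \<Longrightarrow> t < 1 \<Longrightarrow> (\<lambda>k. \<Psi> i k t) \<longlonglongrightarrow> indicator {a$i<..<b$i} t"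
    by metis
  show thesis
  proof (rule that[of "\<lambda>k x. \<Prod>i\<in>UNIV. \<Psi> i k (x$i)"])
    show "trig_poly (\<lambda>x. \<Prod>i\<in>UNIV. \<Psi> i k (x$i))" for k
      by (intro trig_poly_prod) (auto intro: \<Psi>_trig_poly)
    have "\<bar>\<Prod>i\<in>UNIV. \<Psi> i k (x$i)\<bar> \<le> (\<Prod>i\<in>(UNIV::'n set). 2)" for k x
      unfolding abs_prod by (intro prod_mono) (auto intro: \<Psi>_bound)
    then show "\<bar>\<Prod>i\<in>UNIV. \<Psi> i k (x$i)\<bar> \<le> 2 ^ CARD('n)" for k x by simp
    fix x :: "real^'n" assume "x \<in> box 0 1"
    then have "(\<lambda>k. \<Prod>i\<in>UNIV. \<Psi> i k (x$i)) \<longlonglongrightarrow> (\<Prod>i\<in>UNIV. indicator {a$i<..<b$i} (x$i))"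
      by (intro tendsto_prod \<Psi>_lim) (auto simp: mem_box_cart)
    then show "(\<lambda>k. \<Prod>i\<in>UNIV. \<Psi> i k (x$i)) \<longlonglongrightarrow> indicator (box a b) x"
      unfolding prod_indicator_eq_indicator_box .
  qed
qed

section \<open>The fundamental lemma of the calculus of variations\<close>

lemma emeasure_density_integrable:
  fixes g :: "'a::euclidean_space \<Rightarrow> real"
  assumes gi: "integrable lborel g" and g0: "\<And>x. 0 \<le> g x" and A: "A \<in> sets borel"
  shows "emeasure (density lborel (\<lambda>x. ennreal (g x))) A = ennreal (\<integral>x. g x * indicator A x \<partial>lborel)"
proof -
  have gm: "g \<in> borel_measurable borel" using gi by (simp add: borel_measurable_integrable)
  have i2: "integrable lborel (\<lambda>x. g x * indicator A x)"
    using integrable_mult_indicator[of A lborel g] gi A by (simp add: mult.commute)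
  have "emeasure (density lborel (\<lambda>x. ennreal (g x))) A = (\<integral>\<^sup>+ x. ennreal (g x) * indicator A x \<partial>lborel)"
    using gm A by (intro emeasure_density) auto
  also have "\<dots> = (\<integral>\<^sup>+ x. ennreal (g x * indicator A x) \<partial>lborel)"
    by (intro nn_integral_cong) (auto simp: indicator_def)
  also have "\<dots> = ennreal (\<integral>x. g x * indicator A x \<partial>lborel)"
    using i2 g0 by (intro nn_integral_eq_integral) auto
  finally show ?thesis .
qed

lemma density_eq_if_box_integrals_eq:
  fixes P Q :: "'a::euclidean_space \<Rightarrow> real"
  assumes P: "integrable lborel P" "\<And>x. 0 \<le> P x" and Q: "integrable lborel Q" "\<And>x. 0 \<le> Q x"
    and boxes: "\<And>a b. (\<integral>x. P x * indicator (box a b) x \<partial>lborel) = (\<integral>x. Q x * indicator (box a b) x \<partial>lborel)"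
  shows "density lborel (\<lambda>x. ennreal (P x)) = density lborel (\<lambda>x. ennreal (Q x))"
proof (rule measure_eqI_generator_eq[where E="range (\<lambda>(a, b). box a b)" and \<Omega>=UNIV
      and A="\<lambda>n::nat. box (- (real n *\<^sub>R One)) (real n *\<^sub>R One)"])
  show "Int_stable (range (\<lambda>(a, b). box a b::'a set))"
    by (auto simp: Int_stable_def box_Int_box)
  show "range (\<lambda>(a, b). box a b::'a set) \<subseteq> Pow UNIV" by simp
  show "sets (density lborel (\<lambda>x. ennreal (P x))) = sigma_sets UNIV (range (\<lambda>(a, b). box a b))"
    and "sets (density lborel (\<lambda>x. ennreal (Q x))) = sigma_sets UNIV (range (\<lambda>(a, b). box a b))"
    by (simp_all add: borel_eq_box)
  show "range (\<lambda>n::nat. box (- (real n *\<^sub>R One)) (real n *\<^sub>R One)) \<subseteq> range (\<lambda>(a, b). box a b::'a set)"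
    by auto
  show "(\<Union>n::nat. box (- (real n *\<^sub>R One)) (real n *\<^sub>R One)) = (UNIV::'a set)"
    by (rule UN_box_eq_UNIV)
  show "emeasure (density lborel (\<lambda>x. ennreal (P x))) (box (- (real n *\<^sub>R One)) (real n *\<^sub>R One)) \<noteq> \<infinity>" for n
    by (simp add: emeasure_density_integrable[OF P])
  show "emeasure (density lborel (\<lambda>x. ennreal (P x))) X = emeasure (density lborel (\<lambda>x. ennreal (Q x))) X"
    if "X \<in> range (\<lambda>(a, b). box a b)" for X
    using that boxes by (auto simp: emeasure_density_integrable[OF P] emeasure_density_integrable[OF Q])
qed

text \<open>Split \<open>V\<close> into its positive and negative parts: they have equal integrals over all
  boxes, hence equal densities, hence the positive part vanishes a.e.\ on \<open>{V > 0}\<close>.\<close>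
lemma AE_nonpos_if_box_integrals_zero:
  fixes V :: "'a::euclidean_space \<Rightarrow> real"
  assumes Vi: "integrable lborel V"
    and box0: "\<And>a b. (\<integral>x. V x * indicator (box a b) x \<partial>lborel) = 0"
  shows "AE x in lborel. V x \<le> 0"
proof -
  define P where "P x = max 0 (V x)" for x
  define Q where "Q x = max 0 (- V x)" for x
  have Pi: "integrable lborel P" unfolding P_def using Vi by (intro integrable_max integrable_zero) auto
  have Qi: "integrable lborel Q" unfolding Q_def using Vi by (intro integrable_max integrable_zero integrable_minus) auto
  have P0: "\<And>x. 0 \<le> P x" and Q0: "\<And>x. 0 \<le> Q x" by (auto simp: P_def Q_def)
  have "(\<integral>x. P x * indicator (box a b) x \<partial>lborel) = (\<integral>x. Q x * indicator (box a b) x \<partial>lborel)" for a b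
  proof -
    have "integrable lborel (\<lambda>x. P x * indicator (box a b) x)" "integrable lborel (\<lambda>x. Q x * indicator (box a b) x)"
      using integrable_mult_indicator[of "box a b" lborel P] integrable_mult_indicator[of "box a b" lborel Q] Pi Qi
      by (simp_all add: mult.commute)
    then have "(\<integral>x. P x * indicator (box a b) x \<partial>lborel) - (\<integral>x. Q x * indicator (box a b) x \<partial>lborel)
        = (\<integral>x. P x * indicator (box a b) x - Q x * indicator (box a b) x \<partial>lborel)"
      by simp
    also have "\<dots> = (\<integral>x. V x * indicator (box a b) x \<partial>lborel)"
      by (intro Bochner_Integration.integral_cong) (auto simp: P_def Q_def indicator_def)
    finally show ?thesis using box0 by simp
  qed
  then have dens: "density lborel (\<lambda>x. ennreal (P x)) = density lborel (\<lambda>x. ennreal (Q x))"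
    by (rule density_eq_if_box_integrals_eq[OF Pi P0 Qi Q0])
  define S where "S = {x. 0 < V x}"
  have Sb: "S \<in> sets borel" unfolding S_def using Vi by (simp add: borel_measurable_integrable)
  have "(\<lambda>x. Q x * indicator S x) = (\<lambda>x. 0)"
    by (intro ext) (simp add: Q_def S_def indicator_def max_def)
  then have "ennreal (\<integral>x. P x * indicator S x \<partial>lborel) = 0"
    using arg_cong[OF dens, of "\<lambda>M. emeasure M S"]
    by (simp add: emeasure_density_integrable[OF Pi P0 Sb] emeasure_density_integrable[OF Qi Q0 Sb])
  moreover have "0 \<le> (\<integral>x. P x * indicator S x \<partial>lborel)"
    using P0 by (intro Bochner_Integration.integral_nonneg) auto
  ultimately have "(\<integral>x. P x * indicator S x \<partial>lborel) = 0" by simp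
  moreover have "integrable lborel (\<lambda>x. P x * indicator S x)"
    using integrable_mult_indicator[of S lborel P] Pi Sb by (simp add: mult.commute)
  ultimately have "AE x in lborel. P x * indicator S x = 0"
    using integral_nonneg_eq_0_iff_AE[of lborel "\<lambda>x. P x * indicator S x"] P0 by simp
  then show ?thesis
    by eventually_elim (auto simp: P_def S_def indicator_def split: if_splits)
qed

lemma AE_eq_0_if_box_integrals_zero:
  fixes V :: "'a::euclidean_space \<Rightarrow> real"
  assumes "integrable lborel V" and "\<And>a b. (\<integral>x. V x * indicator (box a b) x \<partial>lborel) = 0"
  shows "AE x in lborel. V x = 0"
proof -
  have "AE x in lborel. V x \<le> 0" by (rule AE_nonpos_if_box_integrals_zero[OF assms])
  moreover have "AE x in lborel. - V x \<le> 0"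
    using AE_nonpos_if_box_integrals_zero[of "\<lambda>x. - V x"] assms by simp
  ultimately show ?thesis by eventually_elim simp
qed

lemma cube_diff_box_null: "(cube::(real^'n::finite) set) - box 0 1 \<in> null_sets lborel"
proof -
  have "emeasure lborel (cbox (0::real^'n) 1 - box 0 1) = emeasure lborel (cbox (0::real^'n) 1) - emeasure lborel (box (0::real^'n) 1)"
    using emeasure_lborel_box_finite[of "0::real^'n" 1]
    by (intro emeasure_Diff) (auto simp: box_subset_cbox)
  also have "\<dots> = 0"
    by (simp add: emeasure_lborel_cbox_eq emeasure_lborel_box_eq inner_diff_left)
  finally show ?thesis by (auto simp: cube_def null_sets_def)
qed

lemma box_integral_eq_0_if_orthogonal_trig_poly:
  fixes v :: "real^'n::finite \<Rightarrow> real"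
  assumes vi: "set_integrable lborel cube v"
    and orth: "\<And>\<phi>. trig_poly \<phi> \<Longrightarrow> (LINT x:cube|lborel. v x * \<phi> x) = 0"
  shows "(\<integral>x. indicator cube x * v x * indicator (box a b) x \<partial>lborel) = 0"
proof -
  obtain \<Phi> where \<Phi>_trig_poly: "\<And>k. trig_poly (\<Phi> k)" and \<Phi>_bound: "\<And>k x. \<bar>\<Phi> k x\<bar> \<le> 2 ^ CARD('n)"
    and \<Phi>_lim: "\<And>x. x \<in> box 0 1 \<Longrightarrow> (\<lambda>k. \<Phi> k x) \<longlonglongrightarrow> indicator (box a b) x"
    using trig_poly_approx_indicator_box by metis
  define V where "V x = indicator cube x * v x" for x
  have Vi: "integrable lborel V" using vi by (simp add: set_integrable_def V_def[abs_def])
  have "(\<lambda>k. \<integral>x. V x * \<Phi> k x \<partial>lborel) \<longlonglongrightarrow> (\<integral>x. V x * indicator (box a b) x \<partial>lborel)"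
  proof (rule integral_dominated_convergence[where w="\<lambda>x. 2 ^ CARD('n) * \<bar>V x\<bar>"])
    show "(\<lambda>x. V x * indicator (box a b) x) \<in> borel_measurable lborel"
      using Vi by (auto simp: borel_measurable_integrable)
    show "(\<lambda>x. V x * \<Phi> k x) \<in> borel_measurable lborel" for k
      using Vi borel_measurable_continuous_onI[OF trig_poly_continuous[OF \<Phi>_trig_poly]]
      by (auto simp: borel_measurable_integrable)
    show "integrable lborel (\<lambda>x. 2 ^ CARD('n) * \<bar>V x\<bar>)"
      using Vi by (intro integrable_mult_right integrable_abs)
    show "AE x in lborel. norm (V x * \<Phi> k x) \<le> 2 ^ CARD('n) * \<bar>V x\<bar>" for k
      using mult_left_mono[OF \<Phi>_bound abs_ge_zero] by (simp add: abs_mult mult.commute)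
    show "AE x in lborel. (\<lambda>k. V x * \<Phi> k x) \<longlonglongrightarrow> V x * indicator (box a b) x"
      using AE_not_in[OF cube_diff_box_null]
      by eventually_elim (auto simp: V_def intro: tendsto_mult_left \<Phi>_lim)
  qed
  moreover have "(\<integral>x. V x * \<Phi> k x \<partial>lborel) = (LINT x:cube|lborel. v x * \<Phi> k x)" for k
    unfolding set_lebesgue_integral_def V_def by (simp add: mult.assoc)
  ultimately show ?thesis
    using orth[OF \<Phi>_trig_poly] by (simp add: V_def LIMSEQ_const_iff)
qed

lemma AE_cube_eq_0_if_orthogonal_trig_poly:
  fixes v :: "real^'n::finite \<Rightarrow> real"
  assumes vi: "set_integrable lborel cube v"
    and orth: "\<And>\<phi>. trig_poly \<phi> \<Longrightarrow> (LINT x:cube|lborel. v x * \<phi> x) = 0"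
  shows "AE x in lborel. x \<in> cube \<longrightarrow> v x = 0"
proof -
  have "AE x in lborel. indicator cube x * v x = 0"
    using box_integral_eq_0_if_orthogonal_trig_poly[OF vi orth] vi
    by (intro AE_eq_0_if_box_integrals_zero) (simp_all add: set_integrable_def)
  then show ?thesis by eventually_elim (auto simp: indicator_def)
qed

section \<open>Integrals of periodic functions over the unit cube\<close>

lemma set_integrable_cube_continuous:
  fixes g :: "real^'n::finite \<Rightarrow> real"
  assumes "continuous_on UNIV g"
  shows "set_integrable lborel cube g"
  unfolding set_integrable_def cube_def
  using borel_integrable_compact[of "cbox (0::real^'n) 1" g] assms
  by (auto intro: continuous_on_subset)

lemma set_integral_cube_continuous:
  fixes g :: "real^'n::finite \<Rightarrow> real"
  assumes "continuous_on UNIV g"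
  shows "(LINT x:cube|lborel. g x) = integral cube g"
  by (rule set_borel_integral_eq_integral(2)[OF set_integrable_cube_continuous[OF assms]])

lemma integrable_on_cube_continuous:
  fixes g :: "real^'n::finite \<Rightarrow> real"
  shows "continuous_on UNIV g \<Longrightarrow> g integrable_on cube"
  unfolding cube_def by (intro integrable_continuous) (auto intro: continuous_on_subset)

lemma set_integrable_cube_mult_continuous:
  fixes r \<phi> :: "real^'n::finite \<Rightarrow> real"
  assumes ri: "set_integrable lborel cube r" and rm: "r \<in> borel_measurable lborel"
    and \<phi>c: "continuous_on UNIV \<phi>"
  shows "set_integrable lborel cube (\<lambda>x. r x * \<phi> x)"
proof -
  have "compact (\<phi> ` cube)" unfolding cube_def
    by (intro compact_continuous_image continuous_on_subset[OF \<phi>c]) auto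
  then have "bounded (\<phi> ` cube)" by (rule compact_imp_bounded)
  then obtain B where "\<forall>y\<in>\<phi> ` cube. norm y \<le> B" unfolding bounded_iff by blast
  then have B: "\<And>x. x \<in> cube \<Longrightarrow> \<bar>\<phi> x\<bar> \<le> B" by auto
  have i1: "integrable lborel (\<lambda>x. B * \<bar>indicator cube x * r x\<bar>)"
    using ri unfolding set_integrable_def by (intro integrable_mult_right integrable_abs) simp
  show ?thesis
    unfolding set_integrable_def
  proof (rule Bochner_Integration.integrable_bound[OF i1])
    show "(\<lambda>x. indicator cube x *\<^sub>R (r x * \<phi> x)) \<in> borel_measurable lborel"
      using rm \<phi>c by (auto simp: borel_measurable_continuous_onI cube_def intro!: borel_measurable_times borel_measurable_indicator)
    show "AE x in lborel. norm (indicator cube x *\<^sub>R (r x * \<phi> x)) \<le> norm (B * \<bar>indicator cube x * r x\<bar>)"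
    proof (rule AE_I2)
      fix x
      show "norm (indicator cube x *\<^sub>R (r x * \<phi> x)) \<le> norm (B * \<bar>indicator cube x * r x\<bar>)"
      proof (cases "x \<in> cube")
        case True
        have "\<bar>r x\<bar> * \<bar>\<phi> x\<bar> \<le> \<bar>r x\<bar> * B" by (rule mult_left_mono[OF B[OF True]]) simp
        moreover have "0 \<le> B" using B[OF True] by linarith
        ultimately show ?thesis using True by (simp add: abs_mult mult.commute)
      qed simp
    qed
  qed
qed

lemma L2_fun_set_integrable:
  fixes r :: "real^'n::finite \<Rightarrow> real"
  assumes "L2_fun r"
  shows "set_integrable lborel cube r"
proof -
  have i2: "integrable lborel (\<lambda>x. indicator cube x * (r x)\<^sup>2)"
    using assms by (simp add: L2_fun_def set_integrable_def)
  have i1: "integrable lborel (\<lambda>x. indicator (cube::(real^'n) set) x * (1::real))"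
    using set_integrable_cube_continuous[of "\<lambda>x::real^'n. 1::real"] by (simp add: set_integrable_def)
  show "set_integrable lborel cube r"
    unfolding set_integrable_def
  proof (rule Bochner_Integration.integrable_bound[OF Bochner_Integration.integrable_add[OF i1 i2]])
    show "(\<lambda>x. indicator cube x *\<^sub>R r x) \<in> borel_measurable lborel"
      using assms by (auto simp: cube_def L2_fun_def intro!: borel_measurable_times borel_measurable_indicator)
    have "\<bar>r x\<bar> \<le> 1 + (r x)\<^sup>2" for x
      using sum_squares_bound[of 1 "\<bar>r x\<bar>"] by (simp add: power2_eq_square)
    then show "AE x in lborel. norm (indicator cube x *\<^sub>R r x) \<le> norm (indicator cube x * 1 + indicator cube x * (r x)\<^sup>2)"
      by (intro AE_I2) (auto simp: indicator_def)
  qed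
qed

lemma AE_cube_eq_if_test_integrals_eq:
  fixes w c :: "real^'n::finite \<Rightarrow> real"
  assumes wm: "w \<in> borel_measurable lborel" and wi: "set_integrable lborel cube w"
    and cc: "continuous_on UNIV c"
    and eq: "\<And>\<phi>. test_fun \<phi> \<Longrightarrow> (LINT x:cube|lborel. w x * \<phi> x) = (LINT x:cube|lborel. c x * \<phi> x)"
  shows "AE x in lborel. x \<in> cube \<longrightarrow> w x = c x"
proof -
  have "AE x in lborel. x \<in> cube \<longrightarrow> w x - c x = 0"
  proof (rule AE_cube_eq_0_if_orthogonal_trig_poly)
    show "set_integrable lborel cube (\<lambda>x. w x - c x)"
      by (rule set_integral_diff(1)[OF wi set_integrable_cube_continuous[OF cc]])
    fix \<phi> :: "real^'n \<Rightarrow> real" assume "trig_poly \<phi>"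
    then have t: "test_fun \<phi>" and pc: "continuous_on UNIV \<phi>"
      using trig_poly_test_fun trig_poly_continuous by blast+
    have "set_integrable lborel cube (\<lambda>x. w x * \<phi> x)"
      by (rule set_integrable_cube_mult_continuous[OF wi wm pc])
    moreover have "set_integrable lborel cube (\<lambda>x. c x * \<phi> x)"
      using cc pc by (intro set_integrable_cube_continuous continuous_intros)
    ultimately have "(LINT x:cube|lborel. (w x - c x) * \<phi> x) =
        (LINT x:cube|lborel. w x * \<phi> x) - (LINT x:cube|lborel. c x * \<phi> x)"
      by (simp add: left_diff_distrib set_integral_diff(2))
    then show "(LINT x:cube|lborel. (w x - c x) * \<phi> x) = 0" using eq[OF t] by simp
  qed
  then show ?thesis by eventually_elim simp
qed

lemma periodic_add_of_int_axis:
  assumes "periodic R"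
  shows "R (x + of_int k *\<^sub>R axis i 1) = R x"
proof (induction k rule: int_induct[where k=0])
  case (step1 k)
  have "x + of_int (k + 1) *\<^sub>R axis i 1 = (x + of_int k *\<^sub>R axis i 1) + axis i 1"
    by (simp add: algebra_simps)
  then show ?case using step1 assms by (metis periodic_def)
next
  case (step2 k)
  have "x + of_int k *\<^sub>R axis i 1 = (x + of_int (k - 1) *\<^sub>R axis i 1) + axis i 1"
    by (simp add: algebra_simps)
  then show ?case using step2 assms by (metis periodic_def)
qed simp

lemma periodic_add_of_int_sum:
  assumes "periodic R" "finite S"
  shows "R (x + (\<Sum>i\<in>S. of_int (k i) *\<^sub>R axis i 1)) = R x"
  using assms(2)
proof (induction S rule: finite_induct)
  case (insert j F)
  then show ?case
    using periodic_add_of_int_axis[OF assms(1), of "x + (\<Sum>i\<in>F. of_int (k i) *\<^sub>R axis i 1)" "k j" j]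
    by (simp add: algebra_simps)
qed simp

lemma periodic_value_in_cube:
  fixes R :: "real^'n::finite \<Rightarrow> 'b"
  assumes "periodic R"
  obtains y where "y \<in> cube" "R y = R x"
proof
  define y where "y = x + (\<Sum>i\<in>UNIV. of_int (- \<lfloor>x$i\<rfloor>) *\<^sub>R axis i 1)"
  have yj: "y $ j = x$j - of_int \<lfloor>x$j\<rfloor>" for j
  proof -
    have "(\<Sum>i\<in>UNIV. of_int (- \<lfloor>x$i\<rfloor>) *\<^sub>R axis i (1::real)) $ j = (\<Sum>i\<in>UNIV. if i = j then - of_int \<lfloor>x$i\<rfloor> else 0)"
      unfolding sum_component by (intro sum.cong) (auto simp: axis_def)
    then show ?thesis by (simp add: y_def)
  qed
  have "0 \<le> y$j \<and> y$j \<le> 1" for j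
    using yj[of j] of_int_floor_le[of "x$j"] real_of_int_floor_add_one_gt[of "x$j"] by linarith
  then show "y \<in> cube" by (simp add: cube_def mem_box_cart)
  show "R y = R x" unfolding y_def by (rule periodic_add_of_int_sum[OF assms finite])
qed

lemma continuous_periodic_eq_0_if_orthogonal:
  fixes R :: "real^'n::finite \<Rightarrow> real"
  assumes Rc: "continuous_on UNIV R" and Rp: "periodic R"
    and orth: "\<And>\<phi>. test_fun \<phi> \<Longrightarrow> integral cube (\<lambda>x. R x * \<phi> x) = 0"
  shows "R x = 0"
proof -
  have "AE x in lborel. x \<in> cube \<longrightarrow> R x = 0"
  proof (rule AE_cube_eq_0_if_orthogonal_trig_poly)
    show "set_integrable lborel cube R" by (rule set_integrable_cube_continuous[OF Rc])
    fix \<phi> :: "real^'n \<Rightarrow> real" assume \<phi>: "trig_poly \<phi>"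
    have "continuous_on UNIV (\<lambda>x. R x * \<phi> x)"
      using Rc trig_poly_continuous[OF \<phi>] by (intro continuous_intros)
    then show "(LINT x:cube|lborel. R x * \<phi> x) = 0"
      using orth[OF trig_poly_test_fun[OF \<phi>]] by (simp add: set_integral_cube_continuous)
  qed
  then have "AE x \<in> box 0 1 in lebesgue. x \<in> {x. R x = 0}"
    by (intro AE_completion) (auto simp: cube_def elim!: eventually_mono dest: subsetD[OF box_subset_cbox])
  then have box0: "R y = 0" if "y \<in> box 0 1" for y
    using mem_closed_if_AE_lebesgue_open[OF open_box closed_Collect_eq[OF Rc continuous_on_const] _ that]
    by simp
  have "(1/2::real) *\<^sub>R (1::real^'n) \<in> box 0 1" by (simp add: mem_box_cart)
  then have "box (0::real^'n) 1 \<noteq> {}" by blast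
  then have "R y = 0" if "y \<in> cube" for y
    using continuous_constant_on_closure[OF continuous_on_subset[OF Rc] box0] that
    by (simp add: cube_def)
  then show ?thesis using periodic_value_in_cube[OF Rp, of x] by metis
qed

lemma integral_cube_split:
  fixes g :: "real^'n::finite \<Rightarrow> real"
  assumes "continuous_on UNIV g" and c: "0 \<le> c" "c \<le> 1"
  shows "integral cube g = integral (cbox 0 (\<chi> j. if j = i then c else 1)) g + integral (cbox (c *\<^sub>R axis i 1) 1) g"
proof -
  have "integral cube g = integral (cbox 0 1 \<inter> {x. x \<bullet> axis i 1 \<le> c}) g + integral (cbox 0 1 \<inter> {x. x \<bullet> axis i 1 \<ge> c}) g"
    using integrable_on_cube_continuous[OF assms(1)] unfolding cube_def
    by (intro integral_split) (auto simp: cart_eq_inner_axis)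
  moreover have "cbox 0 1 \<inter> {x. x \<bullet> axis i 1 \<le> c} = cbox 0 (\<chi> j. if j = i then c else 1)"
  proof (intro set_eqI iffI)
    fix x :: "real^'n" assume "x \<in> cbox 0 1 \<inter> {x. x \<bullet> axis i 1 \<le> c}"
    then show "x \<in> cbox 0 (\<chi> j. if j = i then c else 1)" by (auto simp: mem_box_cart cart_eq_inner_axis[symmetric])
  next
    fix x :: "real^'n" assume "x \<in> cbox 0 (\<chi> j. if j = i then c else 1)"
    then have a: "0 \<le> x$j \<and> x$j \<le> (if j = i then c else 1)" for j by (simp add: mem_box_cart)
    have "0 \<le> x$j \<and> x$j \<le> 1" for j using a[of j] c by (auto split: if_splits)
    moreover have "x$i \<le> c" using a[of i] by simp
    ultimately show "x \<in> cbox 0 1 \<inter> {x. x \<bullet> axis i 1 \<le> c}"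
      by (simp add: mem_box_cart cart_eq_inner_axis[symmetric])
  qed
  moreover have "cbox (0::real^'n) 1 \<inter> {x. x \<bullet> axis i 1 \<ge> c} = cbox (c *\<^sub>R axis i 1) 1"
  proof (intro set_eqI iffI)
    fix x :: "real^'n" assume "x \<in> cbox 0 1 \<inter> {x. x \<bullet> axis i 1 \<ge> c}"
    then have a: "0 \<le> x$j \<and> x$j \<le> 1" "c \<le> x$i" for j by (auto simp: mem_box_cart cart_eq_inner_axis[symmetric])
    have "(c *\<^sub>R axis i 1) $ j \<le> x$j" for j using a(1)[of j] a(2) by (auto simp: axis_def)
    then show "x \<in> cbox (c *\<^sub>R axis i 1) 1" using a by (simp add: mem_box_cart)
  next
    fix x :: "real^'n" assume "x \<in> cbox (c *\<^sub>R axis i 1) 1"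
    then have a: "(c *\<^sub>R axis i 1) $ j \<le> x$j \<and> x$j \<le> 1" for j by (simp add: mem_box_cart)
    have "0 \<le> x$j \<and> x$j \<le> 1" for j using a[of j] c by (auto simp: axis_def split: if_splits)
    moreover have "c \<le> x$i" using a[of i] by (simp add: axis_def)
    ultimately show "x \<in> cbox 0 1 \<inter> {x. x \<bullet> axis i 1 \<ge> c}"
      by (simp add: mem_box_cart cart_eq_inner_axis[symmetric])
  qed
  ultimately show ?thesis by simp
qed

lemma integral_cbox_shift:
  fixes g :: "real^'n::finite \<Rightarrow> real"
  shows "integral (cbox a b) (\<lambda>x. g (x + c)) = integral (cbox (a + c) (b + c)) g"
proof -
  have "(\<lambda>x. g (x + c)) = g \<circ> (+) c" by (auto simp: add.commute)
  then show ?thesis using integral_shift_cbox_plus[of a b g c] by simp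
qed

lemma integral_cube_translate_periodic:
  fixes w :: "real^'n::finite \<Rightarrow> real"
  assumes per: "periodic w" and wc: "continuous_on UNIV w" and t: "0 \<le> t" "t \<le> 1"
  shows "integral cube (\<lambda>x. w (x + t *\<^sub>R axis i 1)) = integral cube w"
proof -
  define e :: "real^'n" where "e = axis i 1"
  have wc': "continuous_on UNIV (\<lambda>x. w (x + t *\<^sub>R e))"
    by (intro continuous_on_compose2[OF wc] continuous_intros) auto
  have "integral cube (\<lambda>x. w (x + t *\<^sub>R e)) =
      integral (cbox 0 (\<chi> j. if j = i then 1 - t else 1)) (\<lambda>x. w (x + t *\<^sub>R e)) + integral (cbox ((1 - t) *\<^sub>R e) 1) (\<lambda>x. w (x + t *\<^sub>R e))"
    using integral_cube_split[OF wc', of "1 - t" i] t by (simp add: e_def)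
  also have "integral (cbox 0 (\<chi> j. if j = i then 1 - t else 1)) (\<lambda>x. w (x + t *\<^sub>R e)) = integral (cbox (t *\<^sub>R e) 1) w"
  proof -
    have "integral (cbox 0 (\<chi> j. if j = i then 1 - t else 1)) (\<lambda>x. w (x + t *\<^sub>R e)) = integral (cbox (0 + t *\<^sub>R e) ((\<chi> j. if j = i then 1 - t else 1) + t *\<^sub>R e)) w"
      by (rule integral_cbox_shift)
    moreover have "(\<chi> j. if j = i then 1 - t else 1) + t *\<^sub>R e = 1"
      by (auto simp: vec_eq_iff e_def axis_def)
    ultimately show ?thesis by simp
  qed
  also have "integral (cbox ((1 - t) *\<^sub>R e) 1) (\<lambda>x. w (x + t *\<^sub>R e)) = integral (cbox 0 (\<chi> j. if j = i then t else 1)) w"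
  proof -
    have "(\<lambda>x. w (x + t *\<^sub>R e)) = (\<lambda>x. w (x + (t - 1) *\<^sub>R e))"
    proof
      fix x
      have "x + t *\<^sub>R e = (x + (t - 1) *\<^sub>R e) + axis i 1"
        by (simp add: e_def algebra_simps)
      then show "w (x + t *\<^sub>R e) = w (x + (t - 1) *\<^sub>R e)"
        using per unfolding periodic_def by metis
    qed
    then have "integral (cbox ((1 - t) *\<^sub>R e) 1) (\<lambda>x. w (x + t *\<^sub>R e)) =
        integral (cbox ((1 - t) *\<^sub>R e + (t - 1) *\<^sub>R e) (1 + (t - 1) *\<^sub>R e)) w"
      using integral_cbox_shift by simp
    moreover have "(1 - t) *\<^sub>R e + (t - 1) *\<^sub>R e = 0" by (simp add: algebra_simps)
    moreover have "1 + (t - 1) *\<^sub>R e = (\<chi> j. if j = i then t else 1)"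
      by (auto simp: vec_eq_iff e_def axis_def)
    ultimately show ?thesis by simp
  qed
  also have "integral (cbox (t *\<^sub>R e) 1) w + integral (cbox 0 (\<chi> j. if j = i then t else 1)) w = integral cube w"
    using integral_cube_split[OF wc t, of i] by (simp add: e_def)
  finally show ?thesis by (simp add: e_def)
qed

lemma integral_cube_difference_quotient_eq_0:
  fixes w :: "real^'n::finite \<Rightarrow> real"
  assumes "periodic w" and wc: "continuous_on UNIV w" and h: "0 < h" "h \<le> 1"
  shows "integral cube (\<lambda>x. (w (x + h *\<^sub>R axis i 1) - w x) / h) = 0"
proof -
  have "(\<lambda>x. w (x + h *\<^sub>R axis i 1)) integrable_on cube"
    by (intro integrable_on_cube_continuous continuous_on_compose2[OF wc] continuous_intros) auto
  moreover have "w integrable_on cube" by (rule integrable_on_cube_continuous[OF wc])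
  ultimately have "integral cube (\<lambda>x. (w (x + h *\<^sub>R axis i 1) - w x) / h) =
      (integral cube (\<lambda>x. w (x + h *\<^sub>R axis i 1)) - integral cube w) / h"
    by (simp add: integral_diff)
  then show ?thesis using integral_cube_translate_periodic[OF assms(1,2), of h i] h by simp
qed

lemma difference_quotient_along_axis_bounded:
  fixes w w' :: "real^'n::finite \<Rightarrow> real"
  assumes w'c: "continuous_on UNIV w'"
    and der: "\<And>x. ((\<lambda>t. w (x + t *\<^sub>R axis i 1)) has_real_derivative w' x) (at 0)"
  obtains B where "\<And>x h. x \<in> cube \<Longrightarrow> 0 < h \<Longrightarrow> h \<le> 1 \<Longrightarrow>
    \<bar>(w (x + h *\<^sub>R axis i 1) - w x) / h\<bar> \<le> B"
proof -
  define e :: "real^'n" where "e = axis i 1"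
  define K where "K = cbox (0::real^'n) (2 *\<^sub>R 1)"
  have "compact (w' ` K)" unfolding K_def
    by (intro compact_continuous_image continuous_on_subset[OF w'c]) auto
  then obtain B where "\<forall>y\<in>w' ` K. norm y \<le> B"
    using compact_imp_bounded bounded_iff by blast
  then have B: "\<And>y. y \<in> K \<Longrightarrow> \<bar>w' y\<bar> \<le> B" by auto
  have derall: "DERIV (\<lambda>s. w (x + s *\<^sub>R e)) s :> w' (x + s *\<^sub>R e)" for x s
  proof -
    have "((\<lambda>t. w ((x + s *\<^sub>R e) + t *\<^sub>R e)) has_real_derivative w' (x + s *\<^sub>R e)) (at 0)"
      using der[of "x + s *\<^sub>R e"] by (simp add: e_def)
    then have "((\<lambda>t. w (x + (t + s) *\<^sub>R e)) has_real_derivative w' (x + s *\<^sub>R e)) (at 0)"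
      by (simp add: algebra_simps)
    then show ?thesis using DERIV_shift[of "\<lambda>s. w (x + s *\<^sub>R e)" "w' (x + s *\<^sub>R e)" 0 s] by simp
  qed
  show thesis
  proof (rule that)
    fix x :: "real^'n" and h :: real assume x: "x \<in> cube" and h: "0 < h" "h \<le> 1"
    obtain z where z: "0 < z" "z < h" "w (x + h *\<^sub>R e) - w (x + 0 *\<^sub>R e) = (h - 0) * w' (x + z *\<^sub>R e)"
      using MVT2[of 0 h "\<lambda>s. w (x + s *\<^sub>R e)" "\<lambda>s. w' (x + s *\<^sub>R e)"] derall h by blast
    have xj: "0 \<le> x$j \<and> x$j \<le> 1" for j using x by (simp add: cube_def mem_box_cart)
    have "0 \<le> (x + z *\<^sub>R e)$j \<and> (x + z *\<^sub>R e)$j \<le> 2" for j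
      using xj[of j] z h by (cases "j = i") (simp_all add: e_def axis_def)
    then have "\<bar>w' (x + z *\<^sub>R e)\<bar> \<le> B" by (intro B) (simp add: K_def mem_box_cart)
    then show "\<bar>(w (x + h *\<^sub>R axis i 1) - w x) / h\<bar> \<le> B" using z h by (simp add: e_def)
  qed
qed

text \<open>Difference quotients along a period direction have integral zero by translation
  invariance, and converge boundedly to the derivative.\<close>
lemma integral_cube_derivative_along_axis_eq_0:
  fixes w w' :: "real^'n::finite \<Rightarrow> real"
  assumes per: "periodic w" and wc: "continuous_on UNIV w" and w'c: "continuous_on UNIV w'"
    and der: "\<And>x. ((\<lambda>t. w (x + t *\<^sub>R axis i 1)) has_real_derivative w' x) (at 0)"
  shows "integral cube w' = 0"
proof -
  define h where "h k = 1 / (real k + 1)" for k :: nat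
  have h: "0 < h k" "h k \<le> 1" for k by (auto simp: h_def field_simps)
  define f where "f k x = (w (x + h k *\<^sub>R axis i 1) - w x) / h k" for k x
  obtain B where "\<And>x h. x \<in> cube \<Longrightarrow> 0 < h \<Longrightarrow> h \<le> 1 \<Longrightarrow>
      \<bar>(w (x + h *\<^sub>R axis i 1) - w x) / h\<bar> \<le> B"
    using difference_quotient_along_axis_bounded[OF w'c der] by blast
  then have B: "\<And>k x. x \<in> cube \<Longrightarrow> norm (f k x) \<le> B" using h by (simp add: f_def abs_of_pos)
  have "(\<lambda>k. f k x) \<longlonglongrightarrow> w' x" for x
  proof -
    have "((\<lambda>t. (w (x + t *\<^sub>R axis i 1) - w x) / t) \<longlongrightarrow> w' x) (at 0)"
      using DERIV_def[THEN iffD1, OF der[of x]] by simp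
    moreover have "filterlim h (at 0) sequentially"
    proof (rule filterlim_atI)
      show "h \<longlonglongrightarrow> 0" unfolding h_def
        using LIMSEQ_inverse_real_of_nat by (simp add: inverse_eq_divide add.commute)
      show "\<forall>\<^sub>F k in sequentially. h k \<noteq> 0" by (simp add: h_def)
    qed
    ultimately show ?thesis unfolding f_def by (rule filterlim_compose)
  qed
  moreover have "f k integrable_on cube" for k
    unfolding f_def
    by (intro integrable_on_cube_continuous continuous_intros continuous_on_compose2[OF wc])
      (auto simp: h_def)
  ultimately have "(\<lambda>k. integral cube (f k)) \<longlonglongrightarrow> integral cube w'"
    using dominated_convergence(2)[of f cube "\<lambda>x. B" w'] B by (auto simp: cube_def)
  moreover have "integral cube (f k) = 0" for k
    unfolding f_def by (rule integral_cube_difference_quotient_eq_0[OF per wc h])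
  ultimately show ?thesis by (simp add: LIMSEQ_const_iff)
qed

section \<open>Partial derivatives and integration by parts\<close>

text \<open>\<^const>\<open>pd\<close> is defined through \<^const>\<open>deriv\<close> and is junk where the derivative does not exist;
  \<open>has_pd i a\<close> asserts that it does. Only the pure second derivatives enter the Laplacian and
  the divergence, so \<open>periodic_C2_axes\<close> asks for nothing more.\<close>
definition has_pd :: "'n::finite \<Rightarrow> (real^'n \<Rightarrow> real) \<Rightarrow> bool" where
  "has_pd i a \<longleftrightarrow> (\<forall>x. ((\<lambda>t. a (x + t *\<^sub>R axis i 1)) has_real_derivative pd i a x) (at 0))"

definition periodic_C1_along :: "'n::finite \<Rightarrow> (real^'n \<Rightarrow> real) \<Rightarrow> bool" where
  "periodic_C1_along i a \<longleftrightarrow> periodic a \<and> continuous_on UNIV a \<and> continuous_on UNIV (pd i a) \<and> has_pd i a"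

definition periodic_C2_axes :: "(real^'n::finite \<Rightarrow> real) \<Rightarrow> bool" where
  "periodic_C2_axes a \<longleftrightarrow> (\<forall>i. periodic_C1_along i a \<and> periodic_C1_along i (pd i a))"

lemma periodic_C2_axesD:
  assumes "periodic_C2_axes u"
  shows "continuous_on UNIV u" "continuous_on UNIV (pd i u)" "continuous_on UNIV (pd i (pd i u))"
    "periodic_C1_along i u" "periodic_C1_along i (pd i u)"
  using assms by (auto simp: periodic_C2_axes_def periodic_C1_along_def)

lemma periodic_pd: "periodic g \<Longrightarrow> periodic (pd i g)"
  unfolding periodic_def pd_def
proof (intro allI)
  fix x j assume "\<forall>x i. g (x + axis i 1) = g x"
  then have "(\<lambda>t. g (x + axis j 1 + t *\<^sub>R axis i 1)) = (\<lambda>t. g (x + t *\<^sub>R axis i 1))"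
    by (metis add.assoc add.commute)
  then show "deriv (\<lambda>t. g (x + axis j 1 + t *\<^sub>R axis i 1)) 0 = deriv (\<lambda>t. g (x + t *\<^sub>R axis i 1)) 0"
    by simp
qed

lemma has_pd_mult_derivative:
  assumes "has_pd i a" "has_pd i b"
  shows "((\<lambda>t. a (x + t *\<^sub>R axis i 1) * b (x + t *\<^sub>R axis i 1)) has_real_derivative
    pd i a x * b x + a x * pd i b x) (at 0)"
  using DERIV_mult[OF assms[unfolded has_pd_def, rule_format, of x]] by (simp add: mult.commute)

lemma pd_mult:
  assumes "has_pd i a" "has_pd i b"
  shows "pd i (\<lambda>x. a x * b x) = (\<lambda>x. pd i a x * b x + a x * pd i b x)"
  by (rule pd_eqI) (rule has_pd_mult_derivative[OF assms])

lemma has_pd_mult: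
  assumes "has_pd i a" "has_pd i b"
  shows "has_pd i (\<lambda>x. a x * b x)"
  unfolding has_pd_def pd_mult[OF assms] using has_pd_mult_derivative[OF assms] by blast

lemma periodic_C1_along_mult:
  assumes "periodic_C1_along i a" "periodic_C1_along i b"
  shows "periodic_C1_along i (\<lambda>x. a x * b x)"
  using assms unfolding periodic_C1_along_def
  by (auto simp: pd_mult has_pd_mult periodic_def intro!: continuous_intros)

lemma integral_cube_by_parts:
  fixes a b :: "real^'n::finite \<Rightarrow> real"
  assumes A: "periodic_C1_along i a" and B: "periodic_C1_along i b"
  shows "integral cube (\<lambda>x. a x * pd i b x) = - integral cube (\<lambda>x. pd i a x * b x)"
proof -
  have ca: "continuous_on UNIV a" "continuous_on UNIV (pd i a)"
    and cb: "continuous_on UNIV b" "continuous_on UNIV (pd i b)"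
    using A B by (auto simp: periodic_C1_along_def)
  have "integral cube (\<lambda>x. pd i a x * b x + a x * pd i b x) = 0"
  proof (rule integral_cube_derivative_along_axis_eq_0)
    show "periodic (\<lambda>x. a x * b x)" using A B by (auto simp: periodic_C1_along_def periodic_def)
    show "continuous_on UNIV (\<lambda>x. a x * b x)" using ca cb by (intro continuous_intros)
    show "continuous_on UNIV (\<lambda>x. pd i a x * b x + a x * pd i b x)" using ca cb by (intro continuous_intros)
    show "((\<lambda>t. a (x + t *\<^sub>R axis i 1) * b (x + t *\<^sub>R axis i 1)) has_real_derivative
        pd i a x * b x + a x * pd i b x) (at 0)" for x
      using A B by (intro has_pd_mult_derivative) (auto simp: periodic_C1_along_def)
  qed
  moreover have "integral cube (\<lambda>x. pd i a x * b x + a x * pd i b x) =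
      integral cube (\<lambda>x. pd i a x * b x) + integral cube (\<lambda>x. a x * pd i b x)"
    using ca cb by (intro integral_add integrable_on_cube_continuous continuous_intros)
  ultimately show ?thesis by simp
qed

lemma set_integral_cube_by_parts:
  fixes a b :: "real^'n::finite \<Rightarrow> real"
  assumes "periodic_C1_along i a" and "periodic_C1_along i b"
  shows "(LINT x:cube|lborel. a x * pd i b x) = - (LINT x:cube|lborel. pd i a x * b x)"
proof -
  have "continuous_on UNIV (\<lambda>x. a x * pd i b x)" "continuous_on UNIV (\<lambda>x. pd i a x * b x)"
    using assms by (auto simp: periodic_C1_along_def intro!: continuous_intros)
  then show ?thesis
    using integral_cube_by_parts[OF assms] by (simp add: set_integral_cube_continuous)
qed

lemma holder_imp_continuous:
  fixes g :: "real^'n::finite \<Rightarrow> 'b::real_normed_vector"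
  assumes "holder \<alpha> g" "0 < \<alpha>"
  shows "continuous_on UNIV g"
proof -
  obtain C where C: "\<And>x y. norm (g x - g y) \<le> C * dist x y powr \<alpha>" using assms(1) by (auto simp: holder_def)
  have "isCont g x" for x
  proof -
    have t1: "((\<lambda>y. dist y x) \<longlongrightarrow> 0) (at x)"
      using tendsto_dist_iff[THEN iffD1, OF tendsto_ident_at[of x UNIV]] by simp
    have "((\<lambda>y. dist y x powr \<alpha>) \<longlongrightarrow> 0) (at x)"
      by (rule tendsto_zero_powrI[OF t1 tendsto_const _ assms(2)]) auto
    then have "((\<lambda>y. C * dist y x powr \<alpha>) \<longlongrightarrow> C * 0) (at x)"
      by (intro tendsto_mult tendsto_const)
    then have l: "((\<lambda>y. C * dist y x powr \<alpha>) \<longlongrightarrow> 0) (at x)" by simp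
    have b: "\<forall>\<^sub>F y in at x. norm (g y - g x) \<le> C * dist y x powr \<alpha>"
      by (intro always_eventually allI) (rule C)
    have "((\<lambda>y. g y - g x) \<longlongrightarrow> 0) (at x)" by (rule Lim_null_comparison[OF b l])
    then have "(g \<longlongrightarrow> g x) (at x)" by (rule LIM_zero_cancel)
    then show ?thesis by (simp add: isCont_def)
  qed
  then show ?thesis by (simp add: continuous_at_imp_continuous_on)
qed

lemma has_derivative_along_axis:
  assumes "(f has_derivative f') (at x)"
  shows "((\<lambda>t. f (x + t *\<^sub>R axis i 1)) has_derivative (\<lambda>t. f' (t *\<^sub>R axis i 1))) (at 0)"
proof -
  have "((\<lambda>t::real. x + t *\<^sub>R axis i 1) has_derivative (\<lambda>t. t *\<^sub>R axis i 1)) (at 0)"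
    by (auto intro!: derivative_eq_intros)
  moreover have "(f has_derivative f') (at (x + 0 *\<^sub>R axis i 1))" using assms by simp
  ultimately show ?thesis by (rule has_derivative_compose[unfolded o_def])
qed

lemma C2a_imp_periodic_C2_axes:
  assumes "C2a \<alpha> u" "0 < \<alpha>"
  shows "periodic_C2_axes u"
proof -
  obtain Du D2u where per: "periodic u"
    and d1: "\<And>x. (u has_derivative (\<lambda>h. Du x \<bullet> h)) (at x)"
    and d2: "\<And>x. (Du has_derivative (\<lambda>h. D2u x *v h)) (at x)"
    and ho: "holder \<alpha> (D2u :: real^'a \<Rightarrow> real^'a^'a)"
    using assms(1) unfolding C2a_def by blast
  have dd1: "((\<lambda>t. u (x + t *\<^sub>R axis i 1)) has_real_derivative Du x $ i) (at 0)" for x i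
  proof -
    have "(\<lambda>t. Du x \<bullet> (t *\<^sub>R axis i 1)) = (*) (Du x $ i)"
      by (auto simp: cart_eq_inner_axis inner_commute)
    then show ?thesis
      using has_derivative_along_axis[OF d1[of x], of i] by (simp add: has_field_derivative_def)
  qed
  have dd2: "((\<lambda>t. Du (x + t *\<^sub>R axis i 1) $ i) has_real_derivative D2u x $ i $ i) (at 0)" for x i
  proof -
    have "((\<lambda>t. Du (x + t *\<^sub>R axis i 1) $ i) has_derivative (\<lambda>t. (D2u x *v (t *\<^sub>R axis i 1)) $ i)) (at 0)"
      by (rule bounded_linear.has_derivative[OF bounded_linear_vec_nth has_derivative_along_axis[OF d2]])
    moreover have "(\<lambda>t. (D2u x *v (t *\<^sub>R axis i 1)) $ i) = (*) (D2u x $ i $ i)"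
      by (auto simp: matrix_vector_mult_scaleR matrix_vector_mult_basis column_def mult.commute)
    ultimately show ?thesis by (simp add: has_field_derivative_def)
  qed
  have pd1: "pd i u = (\<lambda>x. Du x $ i)" for i by (rule pd_eqI[OF dd1])
  have pd2: "pd i (pd i u) = (\<lambda>x. D2u x $ i $ i)" for i unfolding pd1 by (rule pd_eqI[OF dd2])
  have "continuous_on UNIV u" "continuous_on UNIV Du"
    using d1 d2 by (auto intro!: continuous_at_imp_continuous_on has_derivative_continuous)
  moreover have "continuous_on UNIV D2u" by (rule holder_imp_continuous[OF ho assms(2)])
  ultimately show ?thesis
    unfolding periodic_C2_axes_def periodic_C1_along_def has_pd_def pd2
    using per periodic_pd[OF per] dd1 dd2
    by (auto simp: pd1 intro!: continuous_intros)
qed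

lemma pds_append: "pds (xs @ ys) u = pds xs (pds ys u)"
  by (induction xs) auto

lemma test_fun_has_pd:
  assumes "test_fun \<phi>"
  shows "has_pd i (pds is \<phi>)"
  unfolding has_pd_def pd_def
  using assms unfolding test_fun_def
  by (auto simp: DERIV_deriv_iff_real_differentiable)

lemma test_fun_pd:
  assumes "test_fun \<phi>"
  shows "test_fun (pd i \<phi>)"
proof -
  have "pds is (pd i \<phi>) = pds (is @ [i]) \<phi>" for "is" by (simp add: pds_append)
  then show ?thesis using assms by (simp add: test_fun_def periodic_pd)
qed

lemma test_fun_periodic_C1_along:
  assumes "test_fun \<phi>"
  shows "periodic_C1_along i \<phi>"
proof -
  have "continuous_on UNIV (pds is \<phi>)" for "is" using assms by (simp add: test_fun_def)
  from this[of "[]"] this[of "[i]"] show ?thesis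
    using assms test_fun_has_pd[OF assms, of i "[]"] by (simp add: periodic_C1_along_def test_fun_def)
qed

lemma test_fun_periodic_C2_axes:
  assumes "test_fun \<phi>"
  shows "periodic_C2_axes \<phi>"
  using test_fun_periodic_C1_along[OF assms] test_fun_periodic_C1_along[OF test_fun_pd[OF assms]]
  by (simp add: periodic_C2_axes_def)

lemma pds_linear:
  assumes "test_fun \<phi>" "test_fun \<psi>"
  shows "pds is (\<lambda>x. a * \<phi> x + b * \<psi> x) = (\<lambda>x. a * pds is \<phi> x + b * pds is \<psi> x)"
proof (induction "is")
  case Nil then show ?case by simp
next
  case (Cons j "is")
  have "pd j (\<lambda>x. a * pds is \<phi> x + b * pds is \<psi> x) = (\<lambda>x. a * pd j (pds is \<phi>) x + b * pd j (pds is \<psi>) x)"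
  proof (rule pd_eqI)
    fix x
    show "((\<lambda>t. a * pds is \<phi> (x + t *\<^sub>R axis j 1) + b * pds is \<psi> (x + t *\<^sub>R axis j 1)) has_real_derivative
        a * pd j (pds is \<phi>) x + b * pd j (pds is \<psi>) x) (at 0)"
      using test_fun_has_pd[OF assms(1), of j "is"] test_fun_has_pd[OF assms(2), of j "is"] unfolding has_pd_def
      by (auto intro!: derivative_eq_intros)
  qed
  then show ?case using Cons by simp
qed

lemma test_fun_linear:
  assumes "test_fun \<phi>" "test_fun \<psi>"
  shows "test_fun (\<lambda>x. a * \<phi> x + b * \<psi> x)"
  unfolding test_fun_def pds_linear[OF assms]
proof (intro conjI allI)
  show "periodic (\<lambda>x. a * \<phi> x + b * \<psi> x)" using assms by (auto simp: test_fun_def periodic_def)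
  fix "is"
  show "continuous_on UNIV (\<lambda>x. a * pds is \<phi> x + b * pds is \<psi> x)"
    using assms by (auto simp: test_fun_def intro!: continuous_intros)
  fix i x
  show "(\<lambda>t. a * pds is \<phi> (x + t *\<^sub>R axis i 1) + b * pds is \<psi> (x + t *\<^sub>R axis i 1)) differentiable at 0"
    using assms unfolding test_fun_def by (auto intro!: derivative_intros)
qed

lemma test_fun_zero: "test_fun (\<lambda>x::real^'n::finite. 0)"
  by (rule trig_poly_test_fun) (rule trig_poly_const)

lemma test_fun_sum:
  assumes "finite S" "\<And>i. i \<in> S \<Longrightarrow> test_fun (f i)"
  shows "test_fun (\<lambda>x. \<Sum>i\<in>S. f i x)"
  using assms
proof (induction S rule: finite_induct)
  case empty then show ?case using test_fun_zero by simp
next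
  case (insert a F)
  have "test_fun (\<lambda>x. 1 * f a x + 1 * (\<Sum>i\<in>F. f i x))"
    using insert by (intro test_fun_linear) auto
  then show ?case using insert(1,2) by simp
qed

lemma test_fun_helmholtz:
  assumes "test_fun \<phi>"
  shows "test_fun (\<lambda>x. - lap \<phi> x + lam * \<phi> x)"
proof -
  have "test_fun (lap \<phi>)"
    unfolding lap_def[abs_def] by (intro test_fun_sum) (auto intro: test_fun_pd assms)
  then have "test_fun (\<lambda>x. (-1) * lap \<phi> x + lam * \<phi> x)" using assms by (intro test_fun_linear)
  then show ?thesis by simp
qed

lemma periodic_lap:
  assumes "periodic u"
  shows "periodic (lap u)"
proof -
  have "periodic (pd i (pd i u))" for i by (intro periodic_pd assms)
  then show ?thesis by (simp add: periodic_def lap_def)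
qed

lemma continuous_on_lap: "periodic_C2_axes u \<Longrightarrow> continuous_on UNIV (lap u)"
  unfolding lap_def[abs_def] using periodic_C2_axesD(3) by (intro continuous_intros) auto

lemma continuous_on_grad: "periodic_C2_axes u \<Longrightarrow> continuous_on UNIV (grad u)"
  unfolding grad_def[abs_def] using periodic_C2_axesD(2) by (intro continuous_intros) auto

lemma periodic_grad:
  assumes "periodic u"
  shows "periodic (grad u)"
proof -
  have "periodic (pd i u)" for i by (rule periodic_pd[OF assms])
  then show ?thesis by (simp add: periodic_def grad_def)
qed

lemma diverg_scaleR_grad: "diverg (\<lambda>y. m y *\<^sub>R grad u y) x = (\<Sum>i\<in>UNIV. pd i (\<lambda>y. m y * pd i u y) x)"
  by (simp add: diverg_def grad_def)

lemma continuous_on_diverg_scaleR_grad: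
  assumes "periodic_C2_axes u" "periodic_C2_axes m"
  shows "continuous_on UNIV (diverg (\<lambda>y. m y *\<^sub>R grad u y))"
proof -
  have "periodic_C1_along i (\<lambda>y. m y * pd i u y)" for i
    using assms by (intro periodic_C1_along_mult periodic_C2_axesD)
  then show ?thesis
    unfolding diverg_scaleR_grad[abs_def] by (intro continuous_intros) (simp add: periodic_C1_along_def)
qed

lemma periodic_diverg_scaleR_grad:
  assumes "periodic u" "periodic m"
  shows "periodic (diverg (\<lambda>y. m y *\<^sub>R grad u y))"
proof -
  have "periodic (\<lambda>y. m y * pd i u y)" for i
    using assms periodic_pd[OF assms(1)] by (simp add: periodic_def)
  then have "periodic (pd i (\<lambda>y. m y * pd i u y))" for i by (rule periodic_pd)
  then show ?thesis by (simp add: periodic_def diverg_scaleR_grad)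
qed

lemma integral_cube_second_pd_symmetric:
  assumes "periodic_C2_axes u" "periodic_C2_axes \<phi>"
  shows "integral cube (\<lambda>x. u x * pd i (pd i \<phi>) x) = integral cube (\<lambda>x. pd i (pd i u) x * \<phi> x)"
  using integral_cube_by_parts[OF periodic_C2_axesD(4)[OF assms(1)] periodic_C2_axesD(5)[OF assms(2)]]
    integral_cube_by_parts[OF periodic_C2_axesD(5)[OF assms(1)] periodic_C2_axesD(4)[OF assms(2)]]
  by simp

lemma integral_cube_helmholtz_symmetric:
  assumes U: "periodic_C2_axes u" and P: "periodic_C2_axes \<phi>"
  shows "integral cube (\<lambda>x. u x * (- lap \<phi> x + lam * \<phi> x)) =
    integral cube (\<lambda>x. (- lap u x + lam * u x) * \<phi> x)"
proof -
  note cu = periodic_C2_axesD[OF U] and cp = periodic_C2_axesD[OF P]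
  define D where "D i x = pd i (pd i u) x * \<phi> x - u x * pd i (pd i \<phi>) x" for i x
  have "(\<lambda>x. u x * (- lap \<phi> x + lam * \<phi> x)) = (\<lambda>x. (- lap u x + lam * u x) * \<phi> x + (\<Sum>i\<in>UNIV. D i x))"
    by (auto simp: D_def lap_def algebra_simps sum_subtractf sum_distrib_left sum_distrib_right)
  moreover have "(\<lambda>x. (- lap u x + lam * u x) * \<phi> x) integrable_on cube"
    using cu cp by (auto simp: lap_def[abs_def] intro!: integrable_on_cube_continuous continuous_intros)
  moreover have D_int: "D i integrable_on cube" for i
    using cu cp by (auto simp: D_def[abs_def] intro!: integrable_on_cube_continuous continuous_intros)
  moreover have "integral cube (D i) = 0" for i
  proof -
    have "integral cube (D i) = integral cube (\<lambda>x. pd i (pd i u) x * \<phi> x) - integral cube (\<lambda>x. u x * pd i (pd i \<phi>) x)"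
      using cu cp unfolding D_def[abs_def]
      by (intro integral_diff integrable_on_cube_continuous continuous_intros)
    then show ?thesis using integral_cube_second_pd_symmetric[OF U P] by simp
  qed
  ultimately show ?thesis using D_int by (simp add: integral_add integrable_sum integral_sum)
qed

lemma integral_cube_div_by_parts:
  fixes u m \<phi> :: "real^'n::finite \<Rightarrow> real"
  assumes U: "periodic_C2_axes u" and M: "periodic_C2_axes m" and P: "periodic_C2_axes \<phi>"
  shows "integral cube (\<lambda>x. m x * (grad u x \<bullet> grad \<phi> x)) =
     - integral cube (\<lambda>x. diverg (\<lambda>y. m y *\<^sub>R grad u y) x * \<phi> x)"
proof -
  note cu = periodic_C2_axesD[OF U] and cm = periodic_C2_axesD[OF M] and cp = periodic_C2_axesD[OF P]
  have A: "periodic_C1_along i (\<lambda>y. m y * pd i u y)" for i by (rule periodic_C1_along_mult[OF cm(4) cu(5)])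
  have cA: "continuous_on UNIV (pd i (\<lambda>y. m y * pd i u y))" for i using A by (simp add: periodic_C1_along_def)
  have i1: "(\<lambda>x. m x * pd i u x * pd i \<phi> x) integrable_on cube" for i using cu cm cp by (intro integrable_on_cube_continuous continuous_intros) auto
  have i2: "(\<lambda>x. pd i (\<lambda>y. m y * pd i u y) x * \<phi> x) integrable_on cube" for i
    using cA cp by (intro integrable_on_cube_continuous continuous_intros) auto
  have "integral cube (\<lambda>x. m x * (grad u x \<bullet> grad \<phi> x)) = integral cube (\<lambda>x. \<Sum>i\<in>UNIV. m x * pd i u x * pd i \<phi> x)"
    by (simp add: inner_vec_def grad_def sum_distrib_left mult.assoc)
  also have "\<dots> = (\<Sum>i\<in>UNIV. integral cube (\<lambda>x. m x * pd i u x * pd i \<phi> x))"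
    using i1 by (simp add: integral_sum)
  also have "\<dots> = (\<Sum>i\<in>UNIV. - integral cube (\<lambda>x. pd i (\<lambda>y. m y * pd i u y) x * \<phi> x))"
    using integral_cube_by_parts[OF A cp(4)] by simp
  also have "\<dots> = - integral cube (\<lambda>x. \<Sum>i\<in>UNIV. pd i (\<lambda>y. m y * pd i u y) x * \<phi> x)"
    using i2 by (simp add: integral_sum sum_negf)
  also have "\<dots> = - integral cube (\<lambda>x. (\<Sum>i\<in>UNIV. pd i (\<lambda>y. m y * pd i u y) x) * \<phi> x)"
    by (simp add: sum_distrib_right)
  finally show ?thesis by (simp only: diverg_scaleR_grad)
qed

section \<open>Weak formulation of the MFG system\<close>

lemma distr_distr_of:
  fixes u :: "real^'n::finite \<Rightarrow> real"
  assumes uc: "continuous_on UNIV u"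
  shows "distr (distr_of u)"
  unfolding distr_def
proof (intro conjI allI impI)
  fix \<phi> :: "real^'n \<Rightarrow> real" assume "\<not> test_fun \<phi>"
  then show "distr_of u \<phi> = 0" by (simp add: distr_of_def)
next
  fix \<phi> \<psi> :: "real^'n \<Rightarrow> real" and a b :: real
  assume t: "test_fun \<phi> \<and> test_fun \<psi>"
  then have c: "continuous_on UNIV \<phi>" "continuous_on UNIV \<psi>"
    using periodic_C2_axesD(1) test_fun_periodic_C2_axes by blast+
  have "distr_of u (\<lambda>x. a * \<phi> x + b * \<psi> x) = integral cube (\<lambda>x. a * (u x * \<phi> x) + b * (u x * \<psi> x))"
    using t uc c by (simp add: distr_of_def test_fun_linear set_integral_cube_continuous
        continuous_intros algebra_simps)
  also have "\<dots> = a * integral cube (\<lambda>x. u x * \<phi> x) + b * integral cube (\<lambda>x. u x * \<psi> x)"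
    using uc c by (simp add: integral_add integrable_on_cube_continuous continuous_intros)
  also have "\<dots> = a * distr_of u \<phi> + b * distr_of u \<psi>"
    using t uc c by (simp add: distr_of_def set_integral_cube_continuous continuous_intros)
  finally show "distr_of u (\<lambda>x. a * \<phi> x + b * \<psi> x) = a * distr_of u \<phi> + b * distr_of u \<psi>" .
qed

lemma distr_dscale: "distr w \<Longrightarrow> distr (dscale c w)"
  by (simp add: distr_def dscale_def algebra_simps)

text \<open>Green's identity moves the operator onto \<open>u\<close>, and the fundamental lemma turns the
  resulting weak equation into a pointwise one.\<close>
lemma dist_sol_neg_iff:
  fixes u F :: "real^'n::finite \<Rightarrow> real"
  assumes U: "periodic_C2_axes u" and Fc: "continuous_on UNIV F" and Fp: "periodic F"
    and \<xi>: "\<And>\<phi>. test_fun \<phi> \<Longrightarrow> \<xi> \<phi> = integral cube (\<lambda>x. F x * \<phi> x)"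
  shows "dist_sol lam \<xi> (dscale (-1) (distr_of u)) \<longleftrightarrow> (\<forall>x. - lap u x + lam * u x + F x = 0)"
proof -
  define R where "R x = - lap u x + lam * u x + F x" for x
  have Rc: "continuous_on UNIV R"
    unfolding R_def[abs_def] using continuous_on_lap[OF U] periodic_C2_axesD(1)[OF U] Fc
    by (intro continuous_intros)
  have Rp: "periodic R"
    using periodic_lap[of u] U Fp by (simp add: R_def periodic_def periodic_C2_axes_def periodic_C1_along_def)
  have weak: "dscale (-1) (distr_of u) (\<lambda>x. - lap \<phi> x + lam * \<phi> x) = \<xi> \<phi> \<longleftrightarrow>
      integral cube (\<lambda>x. R x * \<phi> x) = 0" if t: "test_fun \<phi>" for \<phi>
  proof -
    have P: "periodic_C2_axes \<phi>" by (rule test_fun_periodic_C2_axes[OF t])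
    note c = periodic_C2_axesD(1)[OF U] periodic_C2_axesD(1)[OF P] continuous_on_lap[OF U] continuous_on_lap[OF P] Fc
    have "dscale (-1) (distr_of u) (\<lambda>x. - lap \<phi> x + lam * \<phi> x) =
        - integral cube (\<lambda>x. u x * (- lap \<phi> x + lam * \<phi> x))"
      using test_fun_helmholtz[OF t] c
      by (simp add: dscale_def distr_of_def set_integral_cube_continuous continuous_intros)
    also have "\<dots> = - integral cube (\<lambda>x. (- lap u x + lam * u x) * \<phi> x)"
      using integral_cube_helmholtz_symmetric[OF U P] by simp
    moreover have "integral cube (\<lambda>x. R x * \<phi> x) =
        integral cube (\<lambda>x. (- lap u x + lam * u x) * \<phi> x) + integral cube (\<lambda>x. F x * \<phi> x)"
      unfolding R_def distrib_right using c
      by (intro integral_add integrable_on_cube_continuous continuous_intros)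
    ultimately show ?thesis using \<xi>[OF t] by linarith
  qed
  have "dist_sol lam \<xi> (dscale (-1) (distr_of u)) \<longleftrightarrow> (\<forall>\<phi>. test_fun \<phi> \<longrightarrow> integral cube (\<lambda>x. R x * \<phi> x) = 0)"
    using distr_dscale[OF distr_distr_of[OF periodic_C2_axesD(1)[OF U]]] weak
    by (auto simp: dist_sol_def)
  also have "\<dots> \<longleftrightarrow> (\<forall>x. R x = 0)"
    using continuous_periodic_eq_0_if_orthogonal[OF Rc Rp] by auto
  finally show ?thesis by (simp add: R_def)
qed

lemma l2_val_rep:
  assumes "L2d w"
  shows "L2_fun (l2_val w)" "w = distr_of (l2_val w)"
  using someI_ex[OF assms[unfolded L2d_def]] by (simp_all add: l2_val_def)

lemma h1_rep_h1_val_h1_grad: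
  assumes "H1d w"
  shows "h1_rep w (h1_val w) (h1_grad w)"
proof -
  have "\<exists>p. h1_rep w (fst p) (snd p)" using assms by (auto simp: H1d_def)
  from someI_ex[OF this] show ?thesis by (simp add: h1_val_def h1_grad_def)
qed

lemma h1_grad_measurable:
  assumes "H1d w"
  shows "h1_grad w \<in> borel_measurable lborel"
proof -
  have comps: "(\<lambda>x. h1_grad w x $ i) \<in> borel_measurable lborel" for i
    using h1_rep_h1_val_h1_grad[OF assms] unfolding h1_rep_def L2_fun_def by blast
  have "(\<lambda>x. h1_grad w x \<bullet> b) \<in> borel_measurable lborel" if b: "b \<in> Basis" for b
  proof -
    obtain i where "b = axis i 1" using axis_inverse[OF b] by blast
    then show ?thesis using comps[of i] by (simp add: inner_axis)
  qed
  then show ?thesis by (rule borel_measurable_euclidean_space[THEN iffD2, OF ballI])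
qed

lemma AE_cube_l2_val_distr_of:
  fixes m :: "real^'n::finite \<Rightarrow> real"
  assumes "L2d (distr_of m)" and mc: "continuous_on UNIV m"
  shows "AE x in lborel. x \<in> cube \<longrightarrow> l2_val (distr_of m) x = m x"
proof (rule AE_cube_eq_if_test_integrals_eq[OF _ L2_fun_set_integrable mc])
  show "l2_val (distr_of m) \<in> borel_measurable lborel" "L2_fun (l2_val (distr_of m))"
    using l2_val_rep[OF assms(1)] by (simp_all add: L2_fun_def)
  fix \<phi> :: "real^'n \<Rightarrow> real" assume "test_fun \<phi>"
  then show "(LINT x:cube|lborel. l2_val (distr_of m) x * \<phi> x) = (LINT x:cube|lborel. m x * \<phi> x)"
    using fun_cong[OF l2_val_rep(2)[OF assms(1)], of \<phi>] by (simp add: distr_of_def)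
qed

lemma AE_cube_h1_grad_distr_of:
  fixes u :: "real^'n::finite \<Rightarrow> real"
  assumes "H1d (distr_of u)" and U: "periodic_C2_axes u"
  shows "AE x in lborel. x \<in> cube \<longrightarrow> h1_grad (distr_of u) x $ i = pd i u x"
proof -
  define v where "v = h1_val (distr_of u)"
  define g where "g = h1_grad (distr_of u)"
  have Lg: "L2_fun (\<lambda>x. g x $ i)" and eqd: "distr_of u = distr_of v"
    and weak: "\<And>\<phi>. test_fun \<phi> \<Longrightarrow> (LINT x:cube|lborel. v x * pd i \<phi> x) = - (LINT x:cube|lborel. g x $ i * \<phi> x)"
    using h1_rep_h1_val_h1_grad[OF assms(1)] unfolding h1_rep_def v_def g_def by auto
  have "AE x in lborel. x \<in> cube \<longrightarrow> g x $ i = pd i u x"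
  proof (rule AE_cube_eq_if_test_integrals_eq[OF _ L2_fun_set_integrable[OF Lg] periodic_C2_axesD(2)[OF U]])
    show "(\<lambda>x. g x $ i) \<in> borel_measurable lborel" using Lg by (simp add: L2_fun_def)
    fix \<phi> :: "real^'n \<Rightarrow> real" assume t: "test_fun \<phi>"
    have "(LINT x:cube|lborel. u x * pd i \<phi> x) = (LINT x:cube|lborel. v x * pd i \<phi> x)"
      using fun_cong[OF eqd, of "pd i \<phi>"] test_fun_pd[OF t] by (simp add: distr_of_def)
    moreover have "(LINT x:cube|lborel. u x * pd i \<phi> x) = - (LINT x:cube|lborel. pd i u x * \<phi> x)"
      by (rule set_integral_cube_by_parts[OF periodic_C2_axesD(4)[OF U] test_fun_periodic_C1_along[OF t]])
    ultimately show "(LINT x:cube|lborel. g x $ i * \<phi> x) = (LINT x:cube|lborel. pd i u x * \<phi> x)"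
      using weak[OF t] by simp
  qed
  then show ?thesis by (simp add: g_def)
qed

lemma AE_cube_h1_grad_eq_grad:
  fixes u :: "real^'n::finite \<Rightarrow> real"
  assumes "H1d (distr_of u)" and "periodic_C2_axes u"
  shows "AE x in lborel. x \<in> cube \<longrightarrow> h1_grad (distr_of u) x = grad u x"
proof -
  have "AE x in lborel. \<forall>i. x \<in> cube \<longrightarrow> h1_grad (distr_of u) x $ i = pd i u x"
    unfolding AE_all_countable using AE_cube_h1_grad_distr_of[OF assms] by blast
  then show ?thesis by eventually_elim (simp add: grad_def vec_eq_iff)
qed

lemma Gmap_fst_eq_integral:
  fixes u m \<phi> :: "real^'n::finite \<Rightarrow> real"
  assumes H1: "H1d (distr_of u)" and L2: "L2d (distr_of m)" and U: "periodic_C2_axes u"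
    and mc: "continuous_on UNIV m" and fc: "continuous_on UNIV f" and t: "test_fun \<phi>"
  shows "fst (Gmap f lam m0 (distr_of u, distr_of m)) \<phi> =
    integral cube (\<lambda>x. ((norm (grad u x))\<^sup>2 / 2 - f (m x)) * \<phi> x)"
proof -
  define g where "g = h1_grad (distr_of u)"
  define r where "r = l2_val (distr_of m)"
  have pc: "continuous_on UNIV \<phi>" using periodic_C2_axesD(1)[OF test_fun_periodic_C2_axes[OF t]] .
  have cont: "continuous_on UNIV (\<lambda>x. ((norm (grad u x))\<^sup>2 / 2 - f (m x)) * \<phi> x)"
    using continuous_on_grad[OF U] continuous_on_compose2[OF fc mc] pc by (intro continuous_intros) auto
  have "fst (Gmap f lam m0 (distr_of u, distr_of m)) \<phi> = (LINT x:cube|lborel. ((norm (g x))\<^sup>2 / 2 - f (r x)) * \<phi> x)"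
    using t by (simp add: Gmap_def Let_def distr_of_def g_def r_def)
  also have "\<dots> = (LINT x:cube|lborel. ((norm (grad u x))\<^sup>2 / 2 - f (m x)) * \<phi> x)"
  proof (rule set_lebesgue_integral_cong_AE)
    have "r \<in> borel_measurable lborel" using l2_val_rep(1)[OF L2] by (simp add: r_def L2_fun_def)
    then show "(\<lambda>x. ((norm (g x))\<^sup>2 / 2 - f (r x)) * \<phi> x) \<in> borel_measurable lborel"
      using measurable_compose[OF h1_grad_measurable[OF H1] borel_measurable_norm]
        borel_measurable_continuous_on[OF fc] borel_measurable_continuous_onI[OF pc]
      unfolding g_def
      by (intro borel_measurable_times borel_measurable_diff borel_measurable_divide borel_measurable_power) auto
    show "(\<lambda>x. ((norm (grad u x))\<^sup>2 / 2 - f (m x)) * \<phi> x) \<in> borel_measurable lborel"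
      using borel_measurable_continuous_onI[OF cont] by simp
    show "AE x\<in>cube in lborel. ((norm (g x))\<^sup>2 / 2 - f (r x)) * \<phi> x = ((norm (grad u x))\<^sup>2 / 2 - f (m x)) * \<phi> x"
      using AE_cube_h1_grad_eq_grad[OF H1 U] AE_cube_l2_val_distr_of[OF L2 mc]
      by eventually_elim (simp add: g_def r_def)
  qed (simp add: cube_def)
  also have "\<dots> = integral cube (\<lambda>x. ((norm (grad u x))\<^sup>2 / 2 - f (m x)) * \<phi> x)"
    by (rule set_integral_cube_continuous[OF cont])
  finally show ?thesis .
qed

lemma Gmap_snd_eq_integral:
  fixes u m m0 \<phi> :: "real^'n::finite \<Rightarrow> real"
  assumes H1: "H1d (distr_of u)" and L2: "L2d (distr_of m)"
    and U: "periodic_C2_axes u" and M: "periodic_C2_axes m"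
    and m0c: "continuous_on UNIV m0" and t: "test_fun \<phi>"
  shows "snd (Gmap f lam m0 (distr_of u, distr_of m)) \<phi> =
    integral cube (\<lambda>x. (- diverg (\<lambda>y. m y *\<^sub>R grad u y) x - lam * m0 x) * \<phi> x)"
proof -
  define g where "g = h1_grad (distr_of u)"
  define r where "r = l2_val (distr_of m)"
  have P: "periodic_C2_axes \<phi>" by (rule test_fun_periodic_C2_axes[OF t])
  have cont: "continuous_on UNIV (\<lambda>x. m x * (grad u x \<bullet> grad \<phi> x))"
    using periodic_C2_axesD(1)[OF M] continuous_on_grad[OF U] continuous_on_grad[OF P] by (intro continuous_intros)
  have "(LINT x:cube|lborel. r x * (g x \<bullet> grad \<phi> x)) = (LINT x:cube|lborel. m x * (grad u x \<bullet> grad \<phi> x))"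
  proof (rule set_lebesgue_integral_cong_AE)
    have "r \<in> borel_measurable lborel" using l2_val_rep(1)[OF L2] by (simp add: r_def L2_fun_def)
    then show "(\<lambda>x. r x * (g x \<bullet> grad \<phi> x)) \<in> borel_measurable lborel"
      using h1_grad_measurable[OF H1] borel_measurable_continuous_onI[OF continuous_on_grad[OF P]]
      unfolding g_def by (intro borel_measurable_times borel_measurable_inner) auto
    show "(\<lambda>x. m x * (grad u x \<bullet> grad \<phi> x)) \<in> borel_measurable lborel"
      using borel_measurable_continuous_onI[OF cont] by simp
    show "AE x\<in>cube in lborel. r x * (g x \<bullet> grad \<phi> x) = m x * (grad u x \<bullet> grad \<phi> x)"
      using AE_cube_h1_grad_eq_grad[OF H1 U] AE_cube_l2_val_distr_of[OF L2 periodic_C2_axesD(1)[OF M]]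
      by eventually_elim (simp add: g_def r_def)
  qed (simp add: cube_def)
  also have "\<dots> = - integral cube (\<lambda>x. diverg (\<lambda>y. m y *\<^sub>R grad u y) x * \<phi> x)"
    using integral_cube_div_by_parts[OF U M P] cont by (simp add: set_integral_cube_continuous)
  moreover have "(LINT x:cube|lborel. m0 x * \<phi> x) = integral cube (\<lambda>x. m0 x * \<phi> x)"
    using m0c periodic_C2_axesD(1)[OF P] by (intro set_integral_cube_continuous continuous_intros)
  moreover have "integral cube (\<lambda>x. (- diverg (\<lambda>y. m y *\<^sub>R grad u y) x - lam * m0 x) * \<phi> x) =
      - integral cube (\<lambda>x. diverg (\<lambda>y. m y *\<^sub>R grad u y) x * \<phi> x) - lam * integral cube (\<lambda>x. m0 x * \<phi> x)"
    using continuous_on_diverg_scaleR_grad[OF U M] m0c periodic_C2_axesD(1)[OF P]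
    by (simp add: left_diff_distrib integral_diff integrable_on_cube_continuous continuous_intros mult.assoc
        flip: integral_mult_right)
  ultimately show ?thesis
    using t by (simp add: Gmap_def Let_def distr_of_def g_def r_def)
qed

lemma dist_sol_pair_Gmap_iff_MFG_solution:
  fixes u m m0 :: "real^'n::finite \<Rightarrow> real"
  assumes H1: "H1d (distr_of u)" and L2: "L2d (distr_of m)"
    and U: "periodic_C2_axes u" and M: "periodic_C2_axes m"
    and m0: "continuous_on UNIV m0" "periodic m0" and fc: "continuous_on UNIV f"
  shows "dist_sol_pair lam (Gmap f lam m0 (distr_of u, distr_of m)) (pscale (-1) (distr_of u, distr_of m))
    \<longleftrightarrow> MFG_solution lam f m0 u m"
proof -
  have "continuous_on UNIV (\<lambda>x. (norm (grad u x))\<^sup>2 / 2 - f (m x))"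
    using continuous_on_grad[OF U] continuous_on_compose2[OF fc periodic_C2_axesD(1)[OF M]]
    by (intro continuous_intros) auto
  moreover have "periodic (\<lambda>x. (norm (grad u x))\<^sup>2 / 2 - f (m x))"
    using periodic_grad[of u] U M by (simp add: periodic_def periodic_C2_axes_def periodic_C1_along_def)
  ultimately have hjb_iff: "dist_sol lam (fst (Gmap f lam m0 (distr_of u, distr_of m))) (dscale (-1) (distr_of u)) \<longleftrightarrow>
      (\<forall>x. - lap u x + lam * u x + ((norm (grad u x))\<^sup>2 / 2 - f (m x)) = 0)"
    by (rule dist_sol_neg_iff[OF U _ _ Gmap_fst_eq_integral[OF H1 L2 U periodic_C2_axesD(1)[OF M] fc]])
  have "continuous_on UNIV (\<lambda>x. - diverg (\<lambda>y. m y *\<^sub>R grad u y) x - lam * m0 x)"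
    using continuous_on_diverg_scaleR_grad[OF U M] m0(1) by (intro continuous_intros)
  moreover have "periodic (\<lambda>x. - diverg (\<lambda>y. m y *\<^sub>R grad u y) x - lam * m0 x)"
    using periodic_diverg_scaleR_grad[of u m] U M m0(2)
    by (simp add: periodic_def periodic_C2_axes_def periodic_C1_along_def)
  ultimately have fp_iff: "dist_sol lam (snd (Gmap f lam m0 (distr_of u, distr_of m))) (dscale (-1) (distr_of m)) \<longleftrightarrow>
      (\<forall>x. - lap m x + lam * m x + (- diverg (\<lambda>y. m y *\<^sub>R grad u y) x - lam * m0 x) = 0)"
    by (rule dist_sol_neg_iff[OF M _ _ Gmap_snd_eq_integral[OF H1 L2 U M m0(1)]])
  show ?thesis
    unfolding dist_sol_pair_def pscale_def fst_conv snd_conv hjb_iff fp_iff MFG_solution_def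
    by (intro conj_cong all_cong1) linarith+
qed

lemma padd_eq_pzero_iff: "padd w w' = pzero \<longleftrightarrow> w' = pscale (-1) w"
  by (auto simp: padd_def pzero_def pscale_def dadd_def dzero_def dscale_def prod_eq_iff fun_eq_iff add_eq_0_iff)

lemma hypH_T_eq_iff:
  assumes "hypH \<alpha> lam f m0 X NX Z NZ T" and "z \<in> Z"
  shows "T z = w \<longleftrightarrow> dist_sol_pair lam z w"
  using assms unfolding hypH_def by blast

theorem proposition3p1:
  fixes \<alpha> lam :: real and f :: "real \<Rightarrow> real" and m0 u m :: "real^'n \<Rightarrow> real"
    and X Z :: "'n dpair set" and NX NZ :: "'n dpair \<Rightarrow> real" and T :: "'n dpair \<Rightarrow> 'n dpair"
  assumes "0 < \<alpha>" "\<alpha> < 1" "0 < lam"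
    and "prob_density_C0a \<alpha> m0"
    and "W1inf_R f"
    and "hypH \<alpha> lam f m0 X NX Z NZ T"
    and "C2a \<alpha> u" "C2a \<alpha> m"
  shows "MFG_solution lam f m0 u m \<longleftrightarrow>
         padd (distr_of u, distr_of m) (T (Gmap f lam m0 (distr_of u, distr_of m))) = pzero"
proof -
  have U: "periodic_C2_axes u" and M: "periodic_C2_axes m"
    using C2a_imp_periodic_C2_axes assms(1,7,8) by blast+
  have m0: "continuous_on UNIV m0" "periodic m0"
    using assms(4) holder_imp_continuous[OF _ assms(1)] by (auto simp: prob_density_C0a_def C0a_def)
  have fc: "continuous_on UNIV f"
    using assms(5) lipschitz_on_continuous_on by (auto simp: W1inf_R_def)
  define w where "w = (distr_of u, distr_of m)"
  have "w \<in> X" using assms(6-8) unfolding hypH_def w_def by blast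
  then have "H1d (fst w) \<and> L2d (snd w)" "Gmap f lam m0 w \<in> Z"
    using assms(6) unfolding hypH_def by blast+
  then have H1: "H1d (distr_of u)" and L2: "L2d (distr_of m)" and "Gmap f lam m0 w \<in> Z"
    by (simp_all add: w_def)
  then have "padd w (T (Gmap f lam m0 w)) = pzero \<longleftrightarrow>
      dist_sol_pair lam (Gmap f lam m0 w) (pscale (-1) w)"
    using padd_eq_pzero_iff hypH_T_eq_iff[OF assms(6)] by blast
  also have "\<dots> \<longleftrightarrow> MFG_solution lam f m0 u m"
    unfolding w_def by (rule dist_sol_pair_Gmap_iff_MFG_solution[OF H1 L2 U M m0 fc])
  finally show ?thesis by (simp add: w_def)
qed

end
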